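(* Let $n\ge1$, $s\in(0,1)$, $\Omega\subset\mathbb{R}^n$ open bounded with Lipschitz boundary, $K$ a measurable symmetric kernel with $\frac{c\,\chi_{[0,\varrho)}(|x-z|)}{|x-z|^{n+2s}}\le K(x,z)\le\frac{C}{|x-z|^{n+2s}}$ for some $c,C>0$, $\varrho\in(0,+\infty]$. Let $h:\mathbb{R}\to\mathbb{R}$ be continuous, odd and strictly increasing, $\mathcal H(t):=\int_0^th(\tau)d\tau$, $\eta\in L^\infty(\Omega)$ with $\eta\ge0$, $\zeta\in L^2(\Omega)$, and let $J:H^s_0(\Omega)\to\mathbb{R}\cup\{+\infty\}$ be $$J(u)=\frac14\iint_{\mathbb{R}^n\times\mathbb{R}^n}|u(x)-u(z)|^2K(x,z)\,dx\,dz+\int_\Omega\eta\,\mathcal H(u)\,dx-\int_\Omega\zeta u\,dx\quad\text{if }\eta\,(\mathcal H\circ u)\in L^1(\Omega),$$ and $J(u)=+\infty$ otherwise. Then $J$ is weakly lower semicontinuous in $H^s_0(\Omega)$: for every sequence $u_k\in H^s_0(\Omega)$ converging weakly in $H^s_0(\Omega)$ to $u$, $\liminf_{k\to+\infty}J(u_k)\ge J(u)$.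
   Context: $H^s_0(\Omega)=\{u\in H^s(\mathbb{R}^n):u=0\text{ a.e. outside }\Omega\}$, normed by $[u]_s=\left(c_{n,s}\iint\frac{|u(x)-u(y)|^2}{|x-y|^{n+2s}}dx\,dy\right)^{1/2}$ with $c_{n,s}=\frac{2^{2s}\Gamma\left(\frac{n+2s}{2}\right)}{\pi^{n/2}\Gamma(2-s)}s(1-s)$. *)

theory Defs
  imports "HOL-Analysis.Analysis"
begin

definition lipschitz_boundary :: "(real ^ 'n) set \<Rightarrow> bool" where
  "lipschitz_boundary \<Omega> \<longleftrightarrow>
    (\<forall>x0 \<in> frontier \<Omega>. \<exists>r > 0. \<exists>e :: real ^ 'n. \<exists>g :: real ^ 'n \<Rightarrow> real. \<exists>L.
        norm e = 1 \<and> L-lipschitz_on {y. y \<bullet> e = 0} g \<and>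
        ball x0 r \<inter> \<Omega> = {x \<in> ball x0 r. x \<bullet> e > g (x - (x \<bullet> e) *\<^sub>R e)})"

definition cns :: "nat \<Rightarrow> real \<Rightarrow> real" where
  "cns n s = 2 powr (2 * s) * Gamma ((real n + 2 * s) / 2)
              / (pi powr (real n / 2) * Gamma (2 - s)) * s * (1 - s)"

definition Hs0 :: "real \<Rightarrow> (real ^ 'n) set \<Rightarrow> (real ^ 'n \<Rightarrow> real) set" where
  "Hs0 s \<Omega> = {u. u \<in> borel_measurable lborel
      \<and> integrable lborel (\<lambda>x. (u x)\<^sup>2)
      \<and> integrable (lborel \<Otimes>\<^sub>M lborel)
          (\<lambda>(x, y). (u x - u y)\<^sup>2 / dist x y powr (real CARD('n) + 2 * s))
      \<and> (AE x in lborel. x \<notin> \<Omega> \<longrightarrow> u x = 0)}"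

definition hs_inner :: "real \<Rightarrow> (real ^ 'n \<Rightarrow> real) \<Rightarrow> (real ^ 'n \<Rightarrow> real) \<Rightarrow> real" where
  "hs_inner s u v = cns CARD('n) s *
     integral\<^sup>L (lborel \<Otimes>\<^sub>M lborel)
       (\<lambda>(x, y). (u x - u y) * (v x - v y) / dist x y powr (real CARD('n) + 2 * s))"

definition weak_conv_Hs0 ::
  "real \<Rightarrow> (real ^ 'n) set \<Rightarrow> (nat \<Rightarrow> real ^ 'n \<Rightarrow> real) \<Rightarrow> (real ^ 'n \<Rightarrow> real) \<Rightarrow> bool" where
  "weak_conv_Hs0 s \<Omega> uk u \<longleftrightarrow>
     (\<forall>k. uk k \<in> Hs0 s \<Omega>) \<and> u \<in> Hs0 s \<Omega> \<and>
     (\<forall>v \<in> Hs0 s \<Omega>. (\<lambda>k. hs_inner s (uk k) v) \<longlonglongrightarrow> hs_inner s u v)"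

text \<open>H(t) = integral from 0 to t of h (oriented).\<close>
definition primH :: "(real \<Rightarrow> real) \<Rightarrow> real \<Rightarrow> real" where
  "primH h t = interval_lebesgue_integral lborel 0 (ereal t) h"

definition Jfun ::
  "(real ^ 'n) set \<Rightarrow> (real ^ 'n \<Rightarrow> real ^ 'n \<Rightarrow> real) \<Rightarrow> (real \<Rightarrow> real)
   \<Rightarrow> (real ^ 'n \<Rightarrow> real) \<Rightarrow> (real ^ 'n \<Rightarrow> real) \<Rightarrow> (real ^ 'n \<Rightarrow> real) \<Rightarrow> ereal" where
  "Jfun \<Omega> K h \<eta> \<zeta> u =
     (if set_integrable lebesgue \<Omega> (\<lambda>x. \<eta> x * primH h (u x))
      then ereal (1/4 * integral\<^sup>L (lborel \<Otimes>\<^sub>M lborel) (\<lambda>(x, z). \<bar>u x - u z\<bar>\<^sup>2 * K x z)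
                 + set_lebesgue_integral lebesgue \<Omega> (\<lambda>x. \<eta> x * primH h (u x))
                 - set_lebesgue_integral lebesgue \<Omega> (\<lambda>x. \<zeta> x * u x))
      else \<infinity>)"

end

(* The functional J is convex: its quadratic part is a positive semidefinite form and its
   potential part is the integral of the convex function eta * H. Truncating the potential to
   the set where |u| <= M, convexity gives, for every f in H^s_0,
     J f >= c_M + T_M f - T_M u,
   where T_M is the derivative of the truncated functional at u. Since the truncated slope
   eta h(u) is bounded, T_M is a bounded linear functional on H^s_0; by the Riesz representation
   for the Gagliardo inner product (which needs completeness of H^s_0, obtained from the
   fractional Poincare inequality, almost everywhere convergence of fast Cauchy sequences and
   Fatou's lemma) it is continuous for weak convergence, so liminf J(u_k) >= c_M. Finally
   c_M -> J u by monotone convergence, also when eta H(u) is not integrable. *)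

theory Submission
  imports Defs
begin

section \<open>The space \<open>H\<^sup>s\<^sub>0\<close>\<close>

definition frac_kernel :: "real \<Rightarrow> real^'n \<Rightarrow> real^'n \<Rightarrow> real" where
  "frac_kernel s x y = 1 / dist x y powr (real CARD('n) + 2 * s)"

lemma frac_kernel_nonneg: "0 \<le> frac_kernel s x y"
  by (simp add: frac_kernel_def)

lemma frac_kernel_measurable [measurable]:
  "(\<lambda>z. frac_kernel s (fst z) (snd z)) \<in> borel_measurable (lborel \<Otimes>\<^sub>M lborel)"
  unfolding frac_kernel_def by measurable

lemma Hs0_iff:
  "f \<in> Hs0 s \<Omega> \<longleftrightarrow> f \<in> borel_measurable lborel
      \<and> integrable lborel (\<lambda>x. (f x)\<^sup>2)
      \<and> integrable (lborel \<Otimes>\<^sub>M lborel) (\<lambda>(x, y). (f x - f y)\<^sup>2 * frac_kernel s x y)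
      \<and> (AE x in lborel. x \<notin> \<Omega> \<longrightarrow> f x = 0)"
  unfolding Hs0_def frac_kernel_def by (simp add: divide_inverse)

lemma Hs0D:
  assumes "f \<in> Hs0 s \<Omega>"
  shows "f \<in> borel_measurable lborel" "integrable lborel (\<lambda>x. (f x)\<^sup>2)"
    "integrable (lborel \<Otimes>\<^sub>M lborel) (\<lambda>(x, y). (f x - f y)\<^sup>2 * frac_kernel s x y)"
    "AE x in lborel. x \<notin> \<Omega> \<longrightarrow> f x = 0"
  using assms unfolding Hs0_iff by auto

lemma Hs0_zero: "(\<lambda>x. 0) \<in> Hs0 s \<Omega>"
  unfolding Hs0_iff case_prod_beta by simp

lemma Hs0_cmult:
  assumes "f \<in> Hs0 s \<Omega>"
  shows "(\<lambda>x. c * f x) \<in> Hs0 s \<Omega>"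
proof -
  note f = Hs0D[OF assms]
  have "integrable (lborel \<Otimes>\<^sub>M lborel) (\<lambda>(x, y). c\<^sup>2 * ((f x - f y)\<^sup>2 * frac_kernel s x y))"
    using f(3) unfolding case_prod_beta by (intro integrable_mult_right)
  then show ?thesis
    using f unfolding Hs0_iff
    by (auto simp: power_mult_distrib right_diff_distrib[symmetric] mult.assoc case_prod_beta)
qed

lemma square_sum_le: "(a + b)\<^sup>2 \<le> 2 * a\<^sup>2 + 2 * (b :: real)\<^sup>2"
  using zero_le_power2[of "a - b"] by (simp add: power2_sum power2_diff)

lemma Hs0_add:
  assumes "f \<in> Hs0 s \<Omega>" "g \<in> Hs0 s \<Omega>"
  shows "(\<lambda>x. f x + g x) \<in> Hs0 s \<Omega>"
proof -
  note f = Hs0D[OF assms(1)] and g = Hs0D[OF assms(2)]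
  have "integrable lborel (\<lambda>x. (f x + g x)\<^sup>2)"
    by (rule Bochner_Integration.integrable_bound[where f = "\<lambda>x. 2 * (f x)\<^sup>2 + 2 * (g x)\<^sup>2"])
      (use f g square_sum_le in auto)
  moreover have "integrable (lborel \<Otimes>\<^sub>M lborel)
      (\<lambda>(x, y). ((f x + g x) - (f y + g y))\<^sup>2 * frac_kernel s x y)"
  proof (rule Bochner_Integration.integrable_bound[where f = "\<lambda>(x, y).
      2 * ((f x - f y)\<^sup>2 * frac_kernel s x y) + 2 * ((g x - g y)\<^sup>2 * frac_kernel s x y)"])
    show "integrable (lborel \<Otimes>\<^sub>M lborel) (\<lambda>(x, y).
        2 * ((f x - f y)\<^sup>2 * frac_kernel s x y) + 2 * ((g x - g y)\<^sup>2 * frac_kernel s x y))"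
      using f(3) g(3) unfolding case_prod_beta by (intro Bochner_Integration.integrable_add Bochner_Integration.integrable_mult_right; simp)
    show "AE z in lborel \<Otimes>\<^sub>M lborel.
        norm ((\<lambda>(x, y). ((f x + g x) - (f y + g y))\<^sup>2 * frac_kernel s x y) z)
        \<le> norm ((\<lambda>(x, y). 2 * ((f x - f y)\<^sup>2 * frac_kernel s x y)
                           + 2 * ((g x - g y)\<^sup>2 * frac_kernel s x y)) z)"
    proof (intro AE_I2, clarify)
      fix x y
      have "((f x + g x) - (f y + g y))\<^sup>2 \<le> 2 * (f x - f y)\<^sup>2 + 2 * (g x - g y)\<^sup>2"
        using square_sum_le[of "f x - f y" "g x - g y"] by (simp add: algebra_simps)
      then show "norm (((f x + g x) - (f y + g y))\<^sup>2 * frac_kernel s x y)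
          \<le> norm (2 * ((f x - f y)\<^sup>2 * frac_kernel s x y) + 2 * ((g x - g y)\<^sup>2 * frac_kernel s x y))"
        using frac_kernel_nonneg[of s x y] mult_right_mono by (fastforce simp: algebra_simps)
    qed
  qed (use f g in measurable)
  ultimately show ?thesis
    using f g unfolding Hs0_iff by auto
qed

lemma Hs0_diff:
  assumes "f \<in> Hs0 s \<Omega>" "g \<in> Hs0 s \<Omega>"
  shows "(\<lambda>x. f x - g x) \<in> Hs0 s \<Omega>"
  using Hs0_add[OF assms(1) Hs0_cmult[OF assms(2), of "-1"]] by simp

lemma Hs0_lebesgue:
  assumes "f \<in> Hs0 s \<Omega>"
  shows "f \<in> borel_measurable lebesgue" "integrable lebesgue (\<lambda>x. (f x)\<^sup>2)"
    "(\<integral>x. (f x)\<^sup>2 \<partial>lebesgue) = (\<integral>x. (f x)\<^sup>2 \<partial>lborel)"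
proof -
  have [measurable]: "f \<in> borel_measurable lborel" by (rule Hs0D(1)[OF assms])
  show "f \<in> borel_measurable lebesgue" by (rule measurable_completion) simp
  show "integrable lebesgue (\<lambda>x. (f x)\<^sup>2)"
    using Hs0D(2)[OF assms] by (subst integrable_completion) auto
  show "(\<integral>x. (f x)\<^sup>2 \<partial>lebesgue) = (\<integral>x. (f x)\<^sup>2 \<partial>lborel)"
    by (rule integral_completion) simp
qed


section \<open>Quadratic forms of kernels dominated by the fractional kernel\<close>

definition kernel_form ::
  "(real^'n \<Rightarrow> real^'n \<Rightarrow> real) \<Rightarrow> (real^'n \<Rightarrow> real) \<Rightarrow> (real^'n \<Rightarrow> real) \<Rightarrow> real" where
  "kernel_form W f g =
     integral\<^sup>L (lborel \<Otimes>\<^sub>M lborel) (\<lambda>(x, y). (f x - f y) * (g x - g y) * W x y)"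

abbreviation frac_form :: "real \<Rightarrow> (real^'n \<Rightarrow> real) \<Rightarrow> (real^'n \<Rightarrow> real) \<Rightarrow> real" where
  "frac_form s \<equiv> kernel_form (frac_kernel s)"

definition admissible_kernel :: "real \<Rightarrow> (real^'n \<Rightarrow> real^'n \<Rightarrow> real) \<Rightarrow> bool" where
  "admissible_kernel s W \<longleftrightarrow> (\<lambda>(x, y). W x y) \<in> borel_measurable (lborel \<Otimes>\<^sub>M lborel) \<and>
     (\<exists>C\<ge>0. \<forall>x y. x \<noteq> y \<longrightarrow> 0 \<le> W x y \<and> W x y \<le> C * frac_kernel s x y)"

lemma admissible_frac_kernel: "admissible_kernel s (frac_kernel s)"
  unfolding admissible_kernel_def by (auto intro!: exI[of _ 1] simp: frac_kernel_nonneg)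

lemma admissible_kernel_measurable:
  "admissible_kernel s W \<Longrightarrow> (\<lambda>z. W (fst z) (snd z)) \<in> borel_measurable (lborel \<Otimes>\<^sub>M lborel)"
  unfolding admissible_kernel_def by (simp add: split_beta')

lemma admissible_kernel_nonneg: "admissible_kernel s W \<Longrightarrow> x \<noteq> y \<Longrightarrow> 0 \<le> W x y"
  unfolding admissible_kernel_def by blast

lemma admissible_kernel_bound:
  "admissible_kernel s W \<Longrightarrow> \<exists>C\<ge>0. \<forall>x y. x \<noteq> y \<longrightarrow> W x y \<le> C * frac_kernel s x y"
  unfolding admissible_kernel_def by blast

lemma abs_mult_le_sum_squares: "\<bar>a * b\<bar> \<le> a\<^sup>2 + (b :: real)\<^sup>2"
proof -
  have "2 * (\<bar>a\<bar> * \<bar>b\<bar>) \<le> \<bar>a\<bar>\<^sup>2 + \<bar>b\<bar>\<^sup>2"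
    using zero_le_power2[of "\<bar>a\<bar> - \<bar>b\<bar>"] unfolding power2_diff by linarith
  then show ?thesis
    unfolding abs_mult power2_abs using mult_nonneg_nonneg[OF abs_ge_zero abs_ge_zero, of a b] by linarith
qed

lemma abs_mult_le_weighted_squares:
  fixes a b w k C :: real
  assumes "0 \<le> w" "w \<le> C * k"
  shows "\<bar>a * b * w\<bar> \<le> C * (a\<^sup>2 * k) + C * (b\<^sup>2 * k)"
proof -
  have "\<bar>a * b * w\<bar> = \<bar>a * b\<bar> * w"
    using assms(1) by (simp add: abs_mult)
  also have "\<dots> \<le> (a\<^sup>2 + b\<^sup>2) * (C * k)"
    using assms by (intro mult_mono abs_mult_le_sum_squares) auto
  finally show ?thesis
    by (simp add: algebra_simps)
qed

lemma kernel_form_integrable: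
  assumes W: "admissible_kernel s W" and f: "f \<in> Hs0 s \<Omega>" and g: "g \<in> Hs0 s \<Omega>"
  shows "integrable (lborel \<Otimes>\<^sub>M lborel) (\<lambda>(x, y). (f x - f y) * (g x - g y) * W x y)"
proof -
  obtain C where C: "\<And>x y. x \<noteq> y \<Longrightarrow> W x y \<le> C * frac_kernel s x y"
    using admissible_kernel_bound[OF W] by blast
  have [measurable]: "(\<lambda>z. W (fst z) (snd z)) \<in> borel_measurable (lborel \<Otimes>\<^sub>M lborel)"
    using W by (rule admissible_kernel_measurable)
  note f = Hs0D[OF f] and g = Hs0D[OF g]
  show ?thesis
  proof (rule Bochner_Integration.integrable_bound[where f = "\<lambda>(x, y).
      C * ((f x - f y)\<^sup>2 * frac_kernel s x y) + C * ((g x - g y)\<^sup>2 * frac_kernel s x y)"])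
    show "integrable (lborel \<Otimes>\<^sub>M lborel) (\<lambda>(x, y).
        C * ((f x - f y)\<^sup>2 * frac_kernel s x y) + C * ((g x - g y)\<^sup>2 * frac_kernel s x y))"
      using f(3) g(3) unfolding case_prod_beta
      by (intro Bochner_Integration.integrable_add Bochner_Integration.integrable_mult_right; simp)
    show "(\<lambda>(x, y). (f x - f y) * (g x - g y) * W x y) \<in> borel_measurable (lborel \<Otimes>\<^sub>M lborel)"
      using f(1) g(1) unfolding case_prod_beta by measurable
    show "AE z in lborel \<Otimes>\<^sub>M lborel. norm ((\<lambda>(x, y). (f x - f y) * (g x - g y) * W x y) z)
        \<le> norm ((\<lambda>(x, y). C * ((f x - f y)\<^sup>2 * frac_kernel s x y)
                           + C * ((g x - g y)\<^sup>2 * frac_kernel s x y)) z)"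
    proof (intro AE_I2, clarify)
      fix x y
      show "norm ((f x - f y) * (g x - g y) * W x y)
          \<le> norm (C * ((f x - f y)\<^sup>2 * frac_kernel s x y) + C * ((g x - g y)\<^sup>2 * frac_kernel s x y))"
      proof (cases "x = y")
        case False
        show ?thesis
          unfolding real_norm_def
          by (rule order_trans[OF abs_mult_le_weighted_squares abs_ge_self])
            (use admissible_kernel_nonneg[OF W False] C[OF False] in auto)
      qed simp
    qed
  qed
qed

lemma kernel_form_commute: "kernel_form W f g = kernel_form W g f"
  unfolding kernel_form_def by (rule Bochner_Integration.integral_cong) (auto simp: algebra_simps)

lemma kernel_form_cmult_left: "kernel_form W (\<lambda>x. c * f x) g = c * kernel_form W f g"
proof -
  have "kernel_form W (\<lambda>x. c * f x) g = integral\<^sup>L (lborel \<Otimes>\<^sub>M lborel)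
      (\<lambda>z. c * (\<lambda>(x, y). (f x - f y) * (g x - g y) * W x y) z)"
    unfolding kernel_form_def by (rule Bochner_Integration.integral_cong) (auto simp: algebra_simps)
  then show ?thesis
    unfolding kernel_form_def by simp
qed

lemma kernel_form_cmult_right: "kernel_form W f (\<lambda>x. c * g x) = c * kernel_form W f g"
  using kernel_form_cmult_left[of W c g f] kernel_form_commute[of W f "\<lambda>x. c * g x"]
    kernel_form_commute[of W g f] by simp

lemma kernel_form_add_left:
  assumes "admissible_kernel s W" "f \<in> Hs0 s \<Omega>" "g \<in> Hs0 s \<Omega>" "h \<in> Hs0 s \<Omega>"
  shows "kernel_form W (\<lambda>x. f x + g x) h = kernel_form W f h + kernel_form W g h"
proof -
  have "kernel_form W (\<lambda>x. f x + g x) h = integral\<^sup>L (lborel \<Otimes>\<^sub>M lborel)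
      (\<lambda>z. (\<lambda>(x, y). (f x - f y) * (h x - h y) * W x y) z
         + (\<lambda>(x, y). (g x - g y) * (h x - h y) * W x y) z)"
    unfolding kernel_form_def by (rule Bochner_Integration.integral_cong) (auto simp: algebra_simps)
  then show ?thesis
    unfolding kernel_form_def
    using kernel_form_integrable[OF assms(1,2,4)] kernel_form_integrable[OF assms(1,3,4)] by simp
qed

lemma kernel_form_add_right:
  assumes "admissible_kernel s W" "f \<in> Hs0 s \<Omega>" "g \<in> Hs0 s \<Omega>" "h \<in> Hs0 s \<Omega>"
  shows "kernel_form W h (\<lambda>x. f x + g x) = kernel_form W h f + kernel_form W h g"
  using kernel_form_add_left[OF assms] kernel_form_commute[of W h "\<lambda>x. f x + g x"]
    kernel_form_commute[of W f h] kernel_form_commute[of W g h] by simp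

lemma kernel_form_nonneg:
  assumes "admissible_kernel s W"
  shows "0 \<le> kernel_form W f f"
  unfolding kernel_form_def
proof (intro integral_nonneg_AE AE_I2, clarify)
  show "0 \<le> (f x - f y) * (f x - f y) * W x y" for x y
    using admissible_kernel_nonneg[OF assms, of x y] by (cases "x = y") auto
qed

lemma kernel_form_expand:
  assumes W: "admissible_kernel s W" and f: "f \<in> Hs0 s \<Omega>" and g: "g \<in> Hs0 s \<Omega>"
  shows "kernel_form W (\<lambda>x. f x + t * g x) (\<lambda>x. f x + t * g x)
    = kernel_form W f f + 2 * t * kernel_form W f g + t\<^sup>2 * kernel_form W g g"
proof -
  have tg: "(\<lambda>x. t * g x) \<in> Hs0 s \<Omega>" by (rule Hs0_cmult[OF g])
  have ftg: "(\<lambda>x. f x + t * g x) \<in> Hs0 s \<Omega>" by (rule Hs0_add[OF f tg])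
  have "kernel_form W (\<lambda>x. f x + t * g x) (\<lambda>x. f x + t * g x)
      = kernel_form W f (\<lambda>x. f x + t * g x) + t * kernel_form W g (\<lambda>x. f x + t * g x)"
    using kernel_form_add_left[OF W f tg ftg] by (simp add: kernel_form_cmult_left)
  also have "\<dots> = kernel_form W f f + t * kernel_form W f g + t * (kernel_form W g f + t * kernel_form W g g)"
    using kernel_form_add_right[OF W f tg f] kernel_form_add_right[OF W f tg g]
    by (simp add: kernel_form_cmult_right)
  finally show ?thesis
    using kernel_form_commute[of W g f] by (simp add: algebra_simps power2_eq_square)
qed

lemma nonneg_quadratic_discriminant:
  fixes A B C :: real
  assumes "\<And>t. 0 \<le> A + 2 * t * B + t\<^sup>2 * C" "0 \<le> C"
  shows "B\<^sup>2 \<le> A * C"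
proof (cases "C = 0")
  case True
  have "B = 0"
  proof (rule ccontr)
    assume "B \<noteq> 0"
    then show False using assms(1)[of "- (A + 1) / (2 * B)"] True by (simp add: field_simps)
  qed
  then show ?thesis using True by simp
next
  case False
  then have C: "C > 0" using assms(2) by simp
  have "0 \<le> A + 2 * (- B / C) * B + (- B / C)\<^sup>2 * C" by (rule assms(1))
  also have "\<dots> = (A * C - B\<^sup>2) / C" using C by (simp add: field_simps power2_eq_square)
  finally show ?thesis using C by (simp add: zero_le_divide_iff)
qed

lemma kernel_form_Cauchy_Schwarz:
  assumes W: "admissible_kernel s W" and f: "f \<in> Hs0 s \<Omega>" and g: "g \<in> Hs0 s \<Omega>"
  shows "\<bar>kernel_form W f g\<bar> \<le> sqrt (kernel_form W f f) * sqrt (kernel_form W g g)"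
proof -
  have "(kernel_form W f g)\<^sup>2 \<le> kernel_form W f f * kernel_form W g g"
  proof (rule nonneg_quadratic_discriminant)
    show "0 \<le> kernel_form W f f + 2 * t * kernel_form W f g + t\<^sup>2 * kernel_form W g g" for t
      using kernel_form_nonneg[OF W, of "\<lambda>x. f x + t * g x"] kernel_form_expand[OF W f g, of t] by simp
  qed (rule kernel_form_nonneg[OF W])
  then show ?thesis
    using kernel_form_nonneg[OF W]
    by (metis abs_ge_zero power2_abs real_le_rsqrt real_sqrt_mult)
qed

lemma kernel_form_convex:
  assumes W: "admissible_kernel s W" and f: "f \<in> Hs0 s \<Omega>" and u: "u \<in> Hs0 s \<Omega>"
  shows "2 * kernel_form W u f - kernel_form W u u \<le> kernel_form W f f"
proof -
  have "0 \<le> kernel_form W (\<lambda>x. f x + (-1) * u x) (\<lambda>x. f x + (-1) * u x)"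
    by (rule kernel_form_nonneg[OF W])
  then show ?thesis
    unfolding kernel_form_expand[OF W f u] using kernel_form_commute[of W u f] by simp
qed

lemma kernel_form_parallelogram:
  assumes W: "admissible_kernel s W" and f: "f \<in> Hs0 s \<Omega>" and g: "g \<in> Hs0 s \<Omega>"
  shows "kernel_form W f f + kernel_form W g g
    = 2 * kernel_form W (\<lambda>x. (f x + g x) / 2) (\<lambda>x. (f x + g x) / 2)
      + kernel_form W (\<lambda>x. g x - f x) (\<lambda>x. g x - f x) / 2"
proof -
  have d: "(\<lambda>x. g x - f x) \<in> Hs0 s \<Omega>" by (rule Hs0_diff[OF g f])
  have "(\<lambda>x. (f x + g x) / 2) = (\<lambda>x. f x + (1/2) * (g x - f x))"
    by (auto simp: field_simps)
  then have "kernel_form W (\<lambda>x. (f x + g x) / 2) (\<lambda>x. (f x + g x) / 2)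
      = kernel_form W f f + kernel_form W f (\<lambda>x. g x - f x)
        + kernel_form W (\<lambda>x. g x - f x) (\<lambda>x. g x - f x) / 4"
    using kernel_form_expand[OF W f d, of "1/2"] by (simp add: power2_eq_square)
  moreover have "kernel_form W g g = kernel_form W f f + 2 * kernel_form W f (\<lambda>x. g x - f x)
      + kernel_form W (\<lambda>x. g x - f x) (\<lambda>x. g x - f x)"
    using kernel_form_expand[OF W f d, of 1] by simp
  ultimately show ?thesis by simp
qed

lemma kernel_form_nn_integral:
  assumes W: "admissible_kernel s W" and f: "f \<in> Hs0 s \<Omega>"
  shows "(\<integral>\<^sup>+z. ennreal ((f (fst z) - f (snd z))\<^sup>2 * W (fst z) (snd z)) \<partial>(lborel \<Otimes>\<^sub>M lborel))
    = ennreal (kernel_form W f f)"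
proof -
  have "AE z in lborel \<Otimes>\<^sub>M lborel. 0 \<le> (f (fst z) - f (snd z))\<^sup>2 * W (fst z) (snd z)"
  proof (intro AE_I2)
    show "0 \<le> (f (fst z) - f (snd z))\<^sup>2 * W (fst z) (snd z)" for z
      using admissible_kernel_nonneg[OF W, of "fst z" "snd z"] by (cases "fst z = snd z") auto
  qed
  then show ?thesis
    using kernel_form_integrable[OF W f f] unfolding kernel_form_def case_prod_beta
    by (subst nn_integral_eq_integral) (auto simp: power2_eq_square)
qed

lemma kernel_form_le_frac_form:
  assumes W: "admissible_kernel s W" and C: "\<And>x y. x \<noteq> y \<Longrightarrow> W x y \<le> C * frac_kernel s x y"
    and f: "f \<in> Hs0 s \<Omega>"
  shows "kernel_form W f f \<le> C * frac_form s f f"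
proof -
  have "kernel_form W f f \<le> integral\<^sup>L (lborel \<Otimes>\<^sub>M lborel)
      (\<lambda>z. C * (\<lambda>(x, y). (f x - f y) * (f x - f y) * frac_kernel s x y) z)"
    unfolding kernel_form_def
  proof (rule integral_mono)
    show "integrable (lborel \<Otimes>\<^sub>M lborel) (\<lambda>z. C * (\<lambda>(x, y). (f x - f y) * (f x - f y) * frac_kernel s x y) z)"
      using kernel_form_integrable[OF admissible_frac_kernel f f] by simp
    show "(\<lambda>(x, y). (f x - f y) * (f x - f y) * W x y) z
        \<le> C * (\<lambda>(x, y). (f x - f y) * (f x - f y) * frac_kernel s x y) z" for z
    proof (cases z)
      case (Pair x y)
      show ?thesis
      proof (cases "x = y")
        case False
        have "(f x - f y) * (f x - f y) * W x y \<le> (f x - f y) * (f x - f y) * (C * frac_kernel s x y)"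
          using C[OF False] by (intro mult_left_mono) auto
        then show ?thesis using Pair by (simp add: mult_ac)
      qed (simp add: Pair)
    qed
  qed (rule kernel_form_integrable[OF W f f])
  then show ?thesis
    unfolding kernel_form_def by simp
qed

section \<open>Poincare inequality and completeness\<close>

lemma frac_form_ge_separated:
  fixes A B :: "(real^'n) set"
  assumes f: "f \<in> Hs0 s \<Omega>" and [measurable]: "A \<in> sets borel" "B \<in> sets borel"
    and B: "emeasure lborel B < \<infinity>" and c: "0 \<le> c"
    and kernel: "\<And>x y. x \<in> A \<Longrightarrow> y \<in> B \<Longrightarrow> c \<le> frac_kernel s x y"
    and f_A: "AE x in lborel. f x \<noteq> 0 \<longrightarrow> x \<in> A" and f_B: "AE y in lborel. y \<in> B \<longrightarrow> f y = 0"
  shows "c * measure lborel B * (\<integral>x. (f x)\<^sup>2 \<partial>lborel) \<le> frac_form s f f"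
proof -
  note f_Hs0 = Hs0D[OF f]
  have [measurable]: "f \<in> borel_measurable lborel" by (rule f_Hs0(1))
  have emeasure_B: "emeasure lborel B = ennreal (measure lborel B)"
    using B by (intro emeasure_eq_ennreal_measure) auto
  have "ennreal (c * measure lborel B) * ennreal (\<integral>x. (f x)\<^sup>2 \<partial>lborel)
      = ennreal (c * measure lborel B) * (\<integral>\<^sup>+x. ennreal (indicator A x * (f x)\<^sup>2) \<partial>lborel)"
    using f_A by (subst nn_integral_eq_integral[OF f_Hs0(2), symmetric])
      (auto simp: indicator_def intro!: arg_cong2[where f = "(*)"] nn_integral_cong_AE)
  also have "\<dots> = (\<integral>\<^sup>+x. ennreal (indicator A x * (f x)\<^sup>2 * c) * emeasure lborel B \<partial>lborel)"
    using c by (subst nn_integral_cmult[symmetric])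
      (auto simp: emeasure_B ennreal_mult[symmetric] mult_ac intro!: nn_integral_cong)
  also have "\<dots> = (\<integral>\<^sup>+x. \<integral>\<^sup>+y. ennreal (indicator A x * (f x)\<^sup>2 * c) * indicator B y \<partial>lborel \<partial>lborel)"
    by (intro nn_integral_cong, subst nn_integral_cmult_indicator) auto
  also have "\<dots> \<le> (\<integral>\<^sup>+x. \<integral>\<^sup>+y. ennreal ((f x - f y)\<^sup>2 * frac_kernel s x y) \<partial>lborel \<partial>lborel)"
  proof (rule nn_integral_mono)
    fix x
    have "AE y in lborel. ennreal (indicator A x * (f x)\<^sup>2 * c) * indicator B y
        \<le> ennreal ((f x - f y)\<^sup>2 * frac_kernel s x y)"
      using f_B
    proof eventually_elim
      case (elim y)
      show ?case
      proof (cases "x \<in> A \<and> y \<in> B")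
        case True
        then have "(f x)\<^sup>2 * c \<le> (f x - f y)\<^sup>2 * frac_kernel s x y"
          using elim kernel[of x y] by (auto intro!: mult_left_mono)
        then show ?thesis using True by (auto intro!: ennreal_leI)
      qed (auto simp: indicator_def)
    qed
    then show "(\<integral>\<^sup>+y. ennreal (indicator A x * (f x)\<^sup>2 * c) * indicator B y \<partial>lborel)
        \<le> (\<integral>\<^sup>+y. ennreal ((f x - f y)\<^sup>2 * frac_kernel s x y) \<partial>lborel)"
      by (rule nn_integral_mono_AE)
  qed
  also have "\<dots> = (\<integral>\<^sup>+z. ennreal ((\<lambda>(x, y). (f x - f y)\<^sup>2 * frac_kernel s x y) z) \<partial>(lborel \<Otimes>\<^sub>M lborel))"
    by (subst lborel.nn_integral_fst[symmetric]) auto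
  also have "\<dots> = ennreal (frac_form s f f)"
    using kernel_form_nn_integral[OF admissible_frac_kernel f] by (simp add: case_prod_beta)
  finally have "ennreal (c * measure lborel B * (\<integral>x. (f x)\<^sup>2 \<partial>lborel)) \<le> ennreal (frac_form s f f)"
    using c by (simp add: ennreal_mult')
  then show ?thesis
    using ennreal_le_iff[OF kernel_form_nonneg[OF admissible_frac_kernel]] by blast
qed

lemma frac_form_Poincare:
  fixes \<Omega> :: "(real^'n) set"
  assumes "bounded \<Omega>" and s: "0 < s"
  shows "\<exists>P>0. \<forall>f\<in>Hs0 s \<Omega>. (\<integral>x. (f x)\<^sup>2 \<partial>lborel) \<le> P * frac_form s f f"
proof -
  obtain R where R: "0 < R" "\<Omega> \<subseteq> ball 0 R"
    using bounded_subset_ballD[OF assms(1)] by blast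
  obtain p :: "real^'n" where p: "norm p = 3 * R"
    using vector_choose_size[of "3 * R"] R by auto
  define c where "c = 1 / (5 * R) powr (real CARD('n) + 2 * s)"
  define m where "m = measure lborel (ball p R)"
  have c: "c > 0" unfolding c_def using R by simp
  have m: "m > 0" unfolding m_def using content_ball_pos[OF R(1)] by simp
  have far: "2 * R < norm y" if "y \<in> ball p R" for y
    using that p norm_triangle_ineq2[of p y] by (auto simp: dist_norm norm_minus_commute)
  have outside: "y \<notin> \<Omega>" if "y \<in> ball p R" for y
    using far[OF that] R by (auto simp: subset_iff)
  \<comment> \<open>the far ball lies outside \<open>\<Omega>\<close>, but within distance \<open>5R\<close> of every point of \<open>\<Omega>\<close>\<close>
  have kernel_ge: "c \<le> frac_kernel s x y" if x: "x \<in> ball 0 R" and y: "y \<in> ball p R" for x y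
  proof -
    have "norm y \<le> norm p + norm (p - y)"
      using norm_triangle_ineq[of p "y - p"] by (simp add: norm_minus_commute)
    moreover have "norm (p - y) < R" "norm x < R" using x y by (auto simp: dist_norm)
    ultimately have d: "0 < dist x y" "dist x y \<le> 5 * R"
      using far[OF y] p norm_triangle_ineq4[of x y] by (auto simp: dist_norm)
    then have "dist x y powr (real CARD('n) + 2 * s) \<le> (5 * R) powr (real CARD('n) + 2 * s)"
      using s by (intro powr_mono2) auto
    then show ?thesis
      unfolding frac_kernel_def c_def using d R(1) by (intro divide_left_mono) auto
  qed
  have "c * m * (\<integral>x. (f x)\<^sup>2 \<partial>lborel) \<le> frac_form s f f" if f: "f \<in> Hs0 s \<Omega>" for f
    unfolding m_def
  proof (rule frac_form_ge_separated[OF f _ _ _ _ kernel_ge])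
    show "AE x in lborel. f x \<noteq> 0 \<longrightarrow> x \<in> ball 0 R"
      using Hs0D(4)[OF f] by eventually_elim (use R(2) in auto)
    show "AE y in lborel. y \<in> ball p R \<longrightarrow> f y = 0"
      using Hs0D(4)[OF f] outside by auto
  qed (use c emeasure_lborel_ball_finite[of p R] in auto)
  then show ?thesis
    using c m by (intro exI[of _ "1 / (c * m)"]) (auto simp: field_simps)
qed

lemma nn_integral_le_of_AE_tendsto:
  fixes g :: "nat \<Rightarrow> 'a \<Rightarrow> real"
  assumes [measurable]: "\<And>j. g j \<in> borel_measurable M"
    and lim: "AE z in M. (\<lambda>j. g j z) \<longlonglongrightarrow> G z"
    and bound: "\<And>j. (\<integral>\<^sup>+z. ennreal (g j z) \<partial>M) \<le> B"
  shows "(\<integral>\<^sup>+z. ennreal (G z) \<partial>M) \<le> B"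
proof -
  have "(\<integral>\<^sup>+z. ennreal (G z) \<partial>M) = (\<integral>\<^sup>+z. liminf (\<lambda>j. ennreal (g j z)) \<partial>M)"
    using lim by (intro nn_integral_cong_AE)
      (auto elim!: eventually_mono intro!: lim_imp_Liminf[symmetric] tendsto_ennrealI)
  also have "\<dots> \<le> liminf (\<lambda>j. \<integral>\<^sup>+z. ennreal (g j z) \<partial>M)"
    by (intro nn_integral_liminf) measurable
  also have "\<dots> \<le> limsup (\<lambda>j. \<integral>\<^sup>+z. ennreal (g j z) \<partial>M)"
    by (rule Liminf_le_Limsup) simp
  also have "\<dots> \<le> B"
    using bound by (intro Limsup_bounded) auto
  finally show ?thesis .
qed

lemma abs_le_weighted_square: "\<bar>d\<bar> \<le> 2 ^ k * d\<^sup>2 + (1/2 :: real) ^ k"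
proof -
  have "0 \<le> (2 ^ k * \<bar>d\<bar> - 1)\<^sup>2" by simp
  then have "2 * (2 ^ k * \<bar>d\<bar>) \<le> (2 ^ k * \<bar>d\<bar>)\<^sup>2 + 1"
    unfolding power2_diff by simp
  then have "2 * \<bar>d\<bar> \<le> 2 ^ k * d\<^sup>2 + (1/2) ^ k"
    by (simp add: power2_eq_square field_simps power_divide)
  then show ?thesis
    using zero_le_power[of "1/2::real" k] by simp
qed

text \<open>The weighted sum \<open>\<Sum>\<^sub>k 2\<^sup>k (f\<^sub>k\<^sub>+\<^sub>1 - f\<^sub>k)\<^sup>2\<close> has finite integral, hence is finite almost
  everywhere, and wherever it is finite the increments are summable because
  \<open>\<bar>d\<bar> \<le> 2\<^sup>k d\<^sup>2 + 2\<^sup>-\<^sup>k\<close>.\<close>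
lemma AE_convergent_of_geometric_L2_increments:
  fixes fs :: "nat \<Rightarrow> 'a \<Rightarrow> real"
  assumes [measurable]: "\<And>k. fs k \<in> borel_measurable M"
    and A: "0 \<le> A" and r: "0 \<le> r" "r < 1/2"
    and bound: "\<And>k. (\<integral>\<^sup>+x. ennreal ((fs (Suc k) x - fs k x)\<^sup>2) \<partial>M) \<le> ennreal (A * r ^ k)"
  shows "AE x in M. convergent (\<lambda>k. fs k x)"
proof -
  define D where "D k x = fs (Suc k) x - fs k x" for k x
  have [measurable]: "D k \<in> borel_measurable M" for k unfolding D_def by measurable
  define F where "F x = (\<Sum>k. ennreal (2 ^ k * (D k x)\<^sup>2))" for x
  have F_measurable [measurable]: "F \<in> borel_measurable M" unfolding F_def by measurable
  have "integral\<^sup>N M F = (\<Sum>k. \<integral>\<^sup>+x. ennreal (2 ^ k * (D k x)\<^sup>2) \<partial>M)"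
    unfolding F_def by (rule nn_integral_suminf) measurable
  also have "\<dots> \<le> (\<Sum>k. ennreal (A * (2 * r) ^ k))"
  proof (intro suminf_le)
    fix k
    have "(\<integral>\<^sup>+x. ennreal (2 ^ k * (D k x)\<^sup>2) \<partial>M) = ennreal (2 ^ k) * (\<integral>\<^sup>+x. ennreal ((D k x)\<^sup>2) \<partial>M)"
      by (subst nn_integral_cmult[symmetric]) (auto simp: ennreal_mult)
    also have "\<dots> \<le> ennreal (2 ^ k) * ennreal (A * r ^ k)"
      using bound[of k] unfolding D_def by (intro mult_left_mono) auto
    also have "\<dots> = ennreal (A * (2 * r) ^ k)"
      using A r by (simp add: ennreal_mult[symmetric] power_mult_distrib mult_ac)
    finally show "(\<integral>\<^sup>+x. ennreal (2 ^ k * (D k x)\<^sup>2) \<partial>M) \<le> ennreal (A * (2 * r) ^ k)" .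
  qed auto
  also have "\<dots> = ennreal (\<Sum>k. A * (2 * r) ^ k)"
    using A r by (intro suminf_ennreal2 summable_mult summable_geometric) auto
  finally have "integral\<^sup>N M F \<noteq> \<infinity>" by (auto simp: top_unique)
  from nn_integral_PInf_AE[OF F_measurable this]
  show ?thesis
  proof eventually_elim
    case (elim x)
    have summable: "summable (\<lambda>k. 2 ^ k * (D k x)\<^sup>2)"
      using elim unfolding F_def by (intro summable_suminf_not_top) auto
    have "summable (\<lambda>k. 2 ^ k * (D k x)\<^sup>2 + (1/2) ^ k)"
      by (intro summable_add summable summable_geometric) simp
    then have "summable (\<lambda>k. norm (D k x))"
      by (rule summable_comparison_test'[where N = 0]) (simp add: abs_le_weighted_square)
    then have "summable (\<lambda>k. D k x)"
      by (rule summable_norm_cancel)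
    then have "convergent (\<lambda>k. fs 0 x + (\<Sum>i<k. D i x))"
      by (intro convergent_add convergent_const) (simp add: summable_iff_convergent)
    then show ?case
      using sum_lessThan_telescope[of "\<lambda>i. fs i x"] by (simp add: D_def)
  qed
qed

lemma AE_lborel_pair:
  assumes "AE x in lborel. P x"
  shows "AE z in lborel \<Otimes>\<^sub>M lborel. P (fst z) \<and> P (snd z)"
proof -
  obtain N where N: "{x \<in> space lborel. \<not> P x} \<subseteq> N" "N \<in> null_sets lborel"
    using assms by (auto elim!: AE_E simp: null_sets_def)
  have [measurable]: "N \<in> sets borel"
    using N(2) by (simp add: null_sets_def)
  have "AE z in lborel \<Otimes>\<^sub>M lborel. fst z \<notin> N \<and> snd z \<notin> N"
  proof (rule lborel_pair.AE_pair_measure)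
    show "{z \<in> space (lborel \<Otimes>\<^sub>M lborel). fst z \<notin> N \<and> snd z \<notin> N} \<in> sets (lborel \<Otimes>\<^sub>M lborel)"
      by measurable
    show "AE x in lborel. AE y in lborel. fst (x, y) \<notin> N \<and> snd (x, y) \<notin> N"
      using AE_not_in[OF N(2)] by eventually_elim (use AE_not_in[OF N(2)] in auto)
  qed
  then show ?thesis
    by eventually_elim (use N(1) in auto)
qed

lemma Hs0_AE_limit:
  fixes \<Omega> :: "(real^'n) set"
  assumes \<Omega>: "bounded \<Omega>" and s: "0 < s"
    and fs: "\<And>j. fs j \<in> Hs0 s \<Omega>" and f_measurable [measurable]: "f \<in> borel_measurable lborel"
    and lim: "AE x in lborel. (\<lambda>j. fs j x) \<longlonglongrightarrow> f x"
    and bound: "\<And>j. frac_form s (fs j) (fs j) \<le> B"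
  shows "f \<in> Hs0 s \<Omega>" "frac_form s f f \<le> B"
proof -
  obtain P where P: "P > 0" "\<And>g. g \<in> Hs0 s \<Omega> \<Longrightarrow> (\<integral>x. (g x)\<^sup>2 \<partial>lborel) \<le> P * frac_form s g g"
    using frac_form_Poincare[OF \<Omega> s] by blast
  have [measurable]: "fs j \<in> borel_measurable lborel" for j
    using Hs0D(1)[OF fs] .
  have "(\<integral>\<^sup>+x. ennreal ((f x)\<^sup>2) \<partial>lborel) \<le> ennreal (P * B)"
  proof (rule nn_integral_le_of_AE_tendsto[where g = "\<lambda>j x. (fs j x)\<^sup>2"])
    show "AE x in lborel. (\<lambda>j. (fs j x)\<^sup>2) \<longlonglongrightarrow> (f x)\<^sup>2"
      using lim by eventually_elim (rule tendsto_power)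
    show "(\<integral>\<^sup>+x. ennreal ((fs j x)\<^sup>2) \<partial>lborel) \<le> ennreal (P * B)" for j
    proof -
      have "(\<integral>x. (fs j x)\<^sup>2 \<partial>lborel) \<le> P * B"
        using P(2)[OF fs] mult_left_mono[OF bound[of j]] P(1) by (meson less_imp_le order_trans)
      then show ?thesis
        by (subst nn_integral_eq_integral[OF Hs0D(2)[OF fs]]) (auto intro: ennreal_leI)
    qed
  qed measurable
  then have L2: "integrable lborel (\<lambda>x. (f x)\<^sup>2)"
    by (intro integrableI_nonneg) (auto simp: top.not_eq_extremum intro: le_less_trans)
  have energy: "(\<integral>\<^sup>+z. ennreal ((f (fst z) - f (snd z))\<^sup>2 * frac_kernel s (fst z) (snd z))
      \<partial>(lborel \<Otimes>\<^sub>M lborel)) \<le> ennreal B"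
  proof (rule nn_integral_le_of_AE_tendsto[where
        g = "\<lambda>j z. (fs j (fst z) - fs j (snd z))\<^sup>2 * frac_kernel s (fst z) (snd z)"])
    show "AE z in lborel \<Otimes>\<^sub>M lborel. (\<lambda>j. (fs j (fst z) - fs j (snd z))\<^sup>2 * frac_kernel s (fst z) (snd z))
        \<longlonglongrightarrow> (f (fst z) - f (snd z))\<^sup>2 * frac_kernel s (fst z) (snd z)"
      using AE_lborel_pair[OF lim] by eventually_elim (auto intro!: tendsto_intros)
    show "(\<integral>\<^sup>+z. ennreal ((fs j (fst z) - fs j (snd z))\<^sup>2 * frac_kernel s (fst z) (snd z))
        \<partial>(lborel \<Otimes>\<^sub>M lborel)) \<le> ennreal B" for j
      using bound[of j] by (simp add: kernel_form_nn_integral[OF admissible_frac_kernel fs] ennreal_leI)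
  qed measurable
  then have "integrable (lborel \<Otimes>\<^sub>M lborel) (\<lambda>(x, y). (f x - f y)\<^sup>2 * frac_kernel s x y)"
    unfolding case_prod_beta
    by (intro integrableI_nonneg) (auto simp: frac_kernel_nonneg top.not_eq_extremum intro: le_less_trans)
  moreover have "AE x in lborel. x \<notin> \<Omega> \<longrightarrow> f x = 0"
  proof -
    have "AE x in lborel. \<forall>j. x \<notin> \<Omega> \<longrightarrow> fs j x = 0"
      unfolding AE_all_countable using Hs0D(4)[OF fs] by blast
    then show ?thesis
      using lim by eventually_elim (auto intro: LIMSEQ_unique)
  qed
  ultimately show f_Hs0: "f \<in> Hs0 s \<Omega>"
    using L2 unfolding Hs0_iff by auto
  have "0 \<le> B"
    using kernel_form_nonneg[OF admissible_frac_kernel] bound[of 0] by (rule order_trans)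
  then show "frac_form s f f \<le> B"
    using energy unfolding kernel_form_nn_integral[OF admissible_frac_kernel f_Hs0] by simp
qed

lemma Hs0_fast_Cauchy_limit:
  fixes \<Omega> :: "(real^'n) set"
  assumes \<Omega>: "bounded \<Omega>" and s: "0 < s" and vs: "\<And>k. vs k \<in> Hs0 s \<Omega>"
    and A: "0 \<le> A" and r: "0 \<le> r" "r < 1/2"
    and Cauchy: "\<And>j k. k \<le> j \<Longrightarrow> frac_form s (\<lambda>x. vs j x - vs k x) (\<lambda>x. vs j x - vs k x) \<le> A * r ^ k"
  shows "\<exists>v\<in>Hs0 s \<Omega>. \<forall>k. frac_form s (\<lambda>x. v x - vs k x) (\<lambda>x. v x - vs k x) \<le> A * r ^ k"
proof -
  obtain P where P: "P > 0" "\<And>g. g \<in> Hs0 s \<Omega> \<Longrightarrow> (\<integral>x. (g x)\<^sup>2 \<partial>lborel) \<le> P * frac_form s g g"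
    using frac_form_Poincare[OF \<Omega> s] by blast
  have [measurable]: "vs k \<in> borel_measurable lborel" for k
    using Hs0D(1)[OF vs] .
  have "AE x in lborel. convergent (\<lambda>k. vs k x)"
  proof (rule AE_convergent_of_geometric_L2_increments[OF _ _ r, where A = "P * A"])
    fix k
    have diff: "(\<lambda>x. vs (Suc k) x - vs k x) \<in> Hs0 s \<Omega>" by (rule Hs0_diff[OF vs vs])
    have "(\<integral>x. (vs (Suc k) x - vs k x)\<^sup>2 \<partial>lborel) \<le> P * frac_form s (\<lambda>x. vs (Suc k) x - vs k x) (\<lambda>x. vs (Suc k) x - vs k x)"
      by (rule P(2)[OF diff])
    also have "\<dots> \<le> P * (A * r ^ k)"
      using Cauchy[of k "Suc k"] P(1) by (intro mult_left_mono) auto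
    finally have "(\<integral>x. (vs (Suc k) x - vs k x)\<^sup>2 \<partial>lborel) \<le> P * (A * r ^ k)" .
    then show "(\<integral>\<^sup>+x. ennreal ((vs (Suc k) x - vs k x)\<^sup>2) \<partial>lborel) \<le> ennreal (P * A * r ^ k)"
      by (subst nn_integral_eq_integral[OF Hs0D(2)[OF diff]]) (auto intro: ennreal_leI simp: mult.assoc)
  qed (use P(1) A in simp_all)
  then have lim: "AE x in lborel. (\<lambda>k. vs k x) \<longlonglongrightarrow> lim (\<lambda>k. vs k x)"
    by eventually_elim (simp add: convergent_LIMSEQ_iff)
  define v where "v x = lim (\<lambda>k. vs k x)" for x
  have [measurable]: "v \<in> borel_measurable lborel"
    unfolding v_def by measurable
  have tail: "(\<lambda>x. v x - vs k x) \<in> Hs0 s \<Omega> \<and>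
      frac_form s (\<lambda>x. v x - vs k x) (\<lambda>x. v x - vs k x) \<le> A * r ^ k" for k
  proof -
    have tail_lim: "AE x in lborel. (\<lambda>j. vs (j + k) x - vs k x) \<longlonglongrightarrow> v x - vs k x"
      using lim
    proof eventually_elim
      case (elim x)
      then show ?case
        unfolding v_def by (rule tendsto_diff[OF LIMSEQ_ignore_initial_segment tendsto_const])
    qed
    have tail_bound: "frac_form s (\<lambda>x. vs (j + k) x - vs k x) (\<lambda>x. vs (j + k) x - vs k x) \<le> A * r ^ k" for j
      using Cauchy[of k "j + k"] by simp
    have tail_Hs0: "(\<lambda>x. vs (j + k) x - vs k x) \<in> Hs0 s \<Omega>" for j
      by (rule Hs0_diff[OF vs vs])
    have "(\<lambda>x. v x - vs k x) \<in> borel_measurable lborel"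
      by measurable
    from Hs0_AE_limit[OF \<Omega> s tail_Hs0 this tail_lim tail_bound] show ?thesis ..
  qed
  have "v \<in> Hs0 s \<Omega>"
    using Hs0_add[OF vs[of 0] conjunct1[OF tail[of 0]]] by simp
  with tail show ?thesis
    by blast
qed

section \<open>Riesz representation and weak convergence\<close>

definition bounded_linear_Hs0 :: "real \<Rightarrow> (real^'n) set \<Rightarrow> ((real^'n \<Rightarrow> real) \<Rightarrow> real) \<Rightarrow> bool" where
  "bounded_linear_Hs0 s \<Omega> l \<longleftrightarrow>
     (\<forall>f\<in>Hs0 s \<Omega>. \<forall>g\<in>Hs0 s \<Omega>. l (\<lambda>x. f x + g x) = l f + l g) \<and>
     (\<forall>f\<in>Hs0 s \<Omega>. \<forall>c. l (\<lambda>x. c * f x) = c * l f) \<and>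
     (\<exists>L. \<forall>f\<in>Hs0 s \<Omega>. \<bar>l f\<bar> \<le> L * sqrt (frac_form s f f))"

lemma bounded_linear_Hs0I:
  assumes "\<And>f g. f \<in> Hs0 s \<Omega> \<Longrightarrow> g \<in> Hs0 s \<Omega> \<Longrightarrow> l (\<lambda>x. f x + g x) = l f + l g"
    and "\<And>f c. f \<in> Hs0 s \<Omega> \<Longrightarrow> l (\<lambda>x. c * f x) = c * l f"
    and "\<And>f. f \<in> Hs0 s \<Omega> \<Longrightarrow> \<bar>l f\<bar> \<le> L * sqrt (frac_form s f f)"
  shows "bounded_linear_Hs0 s \<Omega> l"
  using assms unfolding bounded_linear_Hs0_def by blast

lemma bounded_linear_Hs0_add:
  "bounded_linear_Hs0 s \<Omega> l \<Longrightarrow> f \<in> Hs0 s \<Omega> \<Longrightarrow> g \<in> Hs0 s \<Omega> \<Longrightarrow> l (\<lambda>x. f x + g x) = l f + l g"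
  unfolding bounded_linear_Hs0_def by blast

lemma bounded_linear_Hs0_cmult:
  "bounded_linear_Hs0 s \<Omega> l \<Longrightarrow> f \<in> Hs0 s \<Omega> \<Longrightarrow> l (\<lambda>x. c * f x) = c * l f"
  unfolding bounded_linear_Hs0_def by blast

lemma bounded_linear_Hs0_lincomb:
  assumes "bounded_linear_Hs0 s \<Omega> l" "f \<in> Hs0 s \<Omega>" "g \<in> Hs0 s \<Omega>"
  shows "l (\<lambda>x. f x + t * g x) = l f + t * l g"
  using bounded_linear_Hs0_add[OF assms(1,2) Hs0_cmult[OF assms(3)]] bounded_linear_Hs0_cmult[OF assms(1,3)]
  by simp

lemma bounded_linear_Hs0_bound:
  assumes "bounded_linear_Hs0 s \<Omega> l"
  shows "\<exists>L\<ge>0. \<forall>f\<in>Hs0 s \<Omega>. \<bar>l f\<bar> \<le> L * sqrt (frac_form s f f)"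
proof -
  obtain L where L: "\<And>f. f \<in> Hs0 s \<Omega> \<Longrightarrow> \<bar>l f\<bar> \<le> L * sqrt (frac_form s f f)"
    using assms unfolding bounded_linear_Hs0_def by blast
  have "\<bar>l f\<bar> \<le> max L 0 * sqrt (frac_form s f f)" if "f \<in> Hs0 s \<Omega>" for f
    using L[OF that] mult_right_mono[OF max.cobounded1 real_sqrt_ge_zero[OF kernel_form_nonneg[OF admissible_frac_kernel]]]
    by (rule order_trans)
  then show ?thesis
    by (intro exI[of _ "max L 0"]) auto
qed

definition frac_energy :: "real \<Rightarrow> ((real^'n \<Rightarrow> real) \<Rightarrow> real) \<Rightarrow> (real^'n \<Rightarrow> real) \<Rightarrow> real" where
  "frac_energy s l f = frac_form s f f / 2 - l f"

lemma frac_energy_lower_bound: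
  assumes "bounded_linear_Hs0 s \<Omega> l"
  shows "\<exists>B. \<forall>f\<in>Hs0 s \<Omega>. B \<le> frac_energy s l f"
proof -
  obtain L where L: "\<And>f. f \<in> Hs0 s \<Omega> \<Longrightarrow> \<bar>l f\<bar> \<le> L * sqrt (frac_form s f f)"
    using bounded_linear_Hs0_bound[OF assms] by blast
  have "- (L\<^sup>2 / 2) \<le> frac_energy s l f" if "f \<in> Hs0 s \<Omega>" for f
  proof -
    have "0 \<le> (sqrt (frac_form s f f) - L)\<^sup>2" by simp
    then have "2 * L * sqrt (frac_form s f f) \<le> frac_form s f f + L\<^sup>2"
      using kernel_form_nonneg[OF admissible_frac_kernel, of s f] by (simp add: power2_diff mult_ac)
    then show ?thesis
      using L[OF that] unfolding frac_energy_def by linarith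
  qed
  then show ?thesis by blast
qed

lemma frac_energy_midpoint:
  assumes l: "bounded_linear_Hs0 s \<Omega> l" and f: "f \<in> Hs0 s \<Omega>" and g: "g \<in> Hs0 s \<Omega>"
  shows "frac_energy s l f + frac_energy s l g
    = 2 * frac_energy s l (\<lambda>x. (f x + g x) / 2) + frac_form s (\<lambda>x. g x - f x) (\<lambda>x. g x - f x) / 4"
proof -
  have "l (\<lambda>x. (f x + g x) / 2) = l (\<lambda>x. (1/2) * (f x + g x))"
    by (rule arg_cong[where f = l]) (simp add: field_simps)
  also have "\<dots> = (l f + l g) / 2"
    unfolding bounded_linear_Hs0_cmult[OF l Hs0_add[OF f g]] bounded_linear_Hs0_add[OF l f g] by simp
  finally have "l (\<lambda>x. (f x + g x) / 2) = (l f + l g) / 2" .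
  then show ?thesis
    using kernel_form_parallelogram[OF admissible_frac_kernel f g] unfolding frac_energy_def by simp
qed

lemma frac_energy_le_perturbed:
  assumes l: "bounded_linear_Hs0 s \<Omega> l" and f: "f \<in> Hs0 s \<Omega>" and d: "d \<in> Hs0 s \<Omega>"
    and L: "\<And>g. g \<in> Hs0 s \<Omega> \<Longrightarrow> \<bar>l g\<bar> \<le> L * sqrt (frac_form s g g)"
  shows "frac_energy s l f \<le> frac_energy s l (\<lambda>x. f x + (-1) * d x)
    + (sqrt (frac_form s f f) + L) * sqrt (frac_form s d d)"
proof -
  have "frac_energy s l (\<lambda>x. f x + (-1) * d x)
      = frac_energy s l f - frac_form s f d + frac_form s d d / 2 + l d"
    unfolding frac_energy_def kernel_form_expand[OF admissible_frac_kernel f d]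
      bounded_linear_Hs0_lincomb[OF l f d] by simp
  moreover have "frac_form s f d \<le> sqrt (frac_form s f f) * sqrt (frac_form s d d)"
    using kernel_form_Cauchy_Schwarz[OF admissible_frac_kernel f d] by simp
  moreover have "- l d \<le> L * sqrt (frac_form s d d)"
    using L[OF d] by simp
  ultimately show ?thesis
    using kernel_form_nonneg[OF admissible_frac_kernel, of s d] by (simp add: algebra_simps)
qed

lemma frac_energy_minimizer_represents:
  assumes l: "bounded_linear_Hs0 s \<Omega> l" and v: "v \<in> Hs0 s \<Omega>" and w: "w \<in> Hs0 s \<Omega>"
    and min: "\<And>f. f \<in> Hs0 s \<Omega> \<Longrightarrow> frac_energy s l v \<le> frac_energy s l f"
  shows "l w = frac_form s w v"
proof -
  define B where "B = (frac_form s v w - l w) / 2"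
  have "B\<^sup>2 \<le> 0 * (frac_form s w w / 2)"
  proof (rule nonneg_quadratic_discriminant)
    fix t
    have "frac_energy s l v \<le> frac_energy s l (\<lambda>x. v x + t * w x)"
      using min Hs0_add[OF v Hs0_cmult[OF w]] by blast
    then show "0 \<le> 0 + 2 * t * B + t\<^sup>2 * (frac_form s w w / 2)"
      unfolding frac_energy_def kernel_form_expand[OF admissible_frac_kernel v w]
        bounded_linear_Hs0_lincomb[OF l v w] B_def
      by (simp add: field_simps)
  qed (simp add: kernel_form_nonneg[OF admissible_frac_kernel])
  then show ?thesis
    unfolding B_def using kernel_form_commute[of "frac_kernel s" v w] by simp
qed

text \<open>Variational proof: a minimizing sequence of the energy is Cauchy by the parallelogram law,
  its limit minimizes the energy, and the first variation at the minimizer is the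
  representation.\<close>
lemma Hs0_Riesz_representation:
  fixes \<Omega> :: "(real^'n) set"
  assumes \<Omega>: "bounded \<Omega>" and s: "0 < s" and l: "bounded_linear_Hs0 s \<Omega> l"
  obtains v where "v \<in> Hs0 s \<Omega>" "\<And>w. w \<in> Hs0 s \<Omega> \<Longrightarrow> l w = frac_form s w v"
proof -
  let ?E = "frac_energy s l" and ?q = "\<lambda>f. frac_form s f f"
  obtain L where L: "L \<ge> 0" "\<And>f. f \<in> Hs0 s \<Omega> \<Longrightarrow> \<bar>l f\<bar> \<le> L * sqrt (?q f)"
    using bounded_linear_Hs0_bound[OF l] by blast
  have bdd: "bdd_below (?E ` Hs0 s \<Omega>)"
    using frac_energy_lower_bound[OF l] by (auto intro: bdd_belowI)
  define m where "m = Inf (?E ` Hs0 s \<Omega>)"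
  have m_le: "m \<le> ?E f" if "f \<in> Hs0 s \<Omega>" for f
    unfolding m_def using bdd that by (intro cInf_lower) auto
  have "\<exists>f\<in>Hs0 s \<Omega>. ?E f < m + (1/4) ^ k" for k
    using cInf_lessD[of "?E ` Hs0 s \<Omega>" "m + (1/4) ^ k"] Hs0_zero unfolding m_def by auto
  then obtain vs where vs: "\<And>k. vs k \<in> Hs0 s \<Omega>" "\<And>k. ?E (vs k) < m + (1/4) ^ k"
    by metis
  have Cauchy: "?q (\<lambda>x. vs j x - vs k x) \<le> 8 * (1/4) ^ k" if "k \<le> j" for j k
  proof -
    have "(\<lambda>x. (vs k x + vs j x) / 2) \<in> Hs0 s \<Omega>"
      using Hs0_cmult[OF Hs0_add[OF vs(1)[of k] vs(1)[of j]], of "1/2"] by (simp add: field_simps)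
    then have "m \<le> ?E (\<lambda>x. (vs k x + vs j x) / 2)"
      by (rule m_le)
    moreover have "(1/4::real) ^ j \<le> (1/4) ^ k"
      using that by (intro power_decreasing) auto
    ultimately show ?thesis
      using frac_energy_midpoint[OF l vs(1)[of k] vs(1)[of j]] vs(2)[of k] vs(2)[of j] by linarith
  qed
  have "\<exists>v\<in>Hs0 s \<Omega>. \<forall>k. ?q (\<lambda>x. v x - vs k x) \<le> 8 * (1/4) ^ k"
    by (rule Hs0_fast_Cauchy_limit[where vs = vs]) (use \<Omega> s vs(1) Cauchy in auto)
  then obtain v where v: "v \<in> Hs0 s \<Omega>" and tail: "\<And>k. ?q (\<lambda>x. v x - vs k x) \<le> 8 * (1/4) ^ k"
    by blast
  have E_v: "?E v \<le> m + (1/4) ^ k + (sqrt (?q v) + L) * sqrt (8 * (1/4) ^ k)" for k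
  proof -
    have d: "(\<lambda>x. v x - vs k x) \<in> Hs0 s \<Omega>" by (rule Hs0_diff[OF v vs(1)])
    have "(sqrt (?q v) + L) * sqrt (?q (\<lambda>x. v x - vs k x)) \<le> (sqrt (?q v) + L) * sqrt (8 * (1/4) ^ k)"
      using tail[of k] L(1) kernel_form_nonneg[OF admissible_frac_kernel, of s v]
      by (intro mult_left_mono) auto
    then show ?thesis
      using frac_energy_le_perturbed[OF l v d L(2)] vs(2)[of k] by simp
  qed
  have "(\<lambda>k. m + (1/4) ^ k + (sqrt (?q v) + L) * sqrt (8 * (1/4) ^ k))
      \<longlonglongrightarrow> m + 0 + (sqrt (?q v) + L) * sqrt (8 * 0)"
    by (intro tendsto_intros LIMSEQ_power_zero) auto
  then have "(\<lambda>k. m + (1/4) ^ k + (sqrt (?q v) + L) * sqrt (8 * (1/4) ^ k)) \<longlonglongrightarrow> m"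
    by simp
  then have "?E v \<le> m"
    by (rule LIMSEQ_le_const) (use E_v in blast)
  then have "?E v \<le> ?E f" if "f \<in> Hs0 s \<Omega>" for f
    using m_le[OF that] by (rule order_trans)
  with v show ?thesis
    using frac_energy_minimizer_represents[OF l v] that by blast
qed

lemma hs_inner_eq_frac_form: "hs_inner s f g = cns CARD('n) s * frac_form s f g"
  for f g :: "real^'n \<Rightarrow> real"
  unfolding hs_inner_def kernel_form_def frac_kernel_def by (simp add: divide_inverse)

lemma cns_pos: "0 < s \<Longrightarrow> s < 1 \<Longrightarrow> 0 < cns n s"
  unfolding cns_def by (intro mult_pos_pos divide_pos_pos Gamma_real_pos) auto

lemma weak_conv_Hs0_bounded_linear:
  fixes \<Omega> :: "(real^'n) set"
  assumes \<Omega>: "bounded \<Omega>" and s: "0 < s" "s < 1" and l: "bounded_linear_Hs0 s \<Omega> l"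
    and conv: "weak_conv_Hs0 s \<Omega> uk u"
  shows "(\<lambda>k. l (uk k)) \<longlonglongrightarrow> l u"
proof -
  obtain v where v: "v \<in> Hs0 s \<Omega>" "\<And>w. w \<in> Hs0 s \<Omega> \<Longrightarrow> l w = frac_form s w v"
    using Hs0_Riesz_representation[OF \<Omega> s(1) l] by blast
  define c where "c = cns CARD('n) s"
  have c: "0 < c" unfolding c_def using cns_pos[OF s] .
  define v' where "v' x = v x / c" for x
  have v': "v' \<in> Hs0 s \<Omega>"
    using Hs0_cmult[OF v(1), of "1 / c"] unfolding v'_def by simp
  have represents: "hs_inner s w v' = l w" if "w \<in> Hs0 s \<Omega>" for w
  proof -
    have "hs_inner s w v' = c * frac_form s w (\<lambda>x. (1 / c) * v x)"
      unfolding hs_inner_eq_frac_form c_def[symmetric] v'_def by simp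
    also have "\<dots> = l w"
      unfolding kernel_form_cmult_right using c v(2)[OF that] by simp
    finally show ?thesis .
  qed
  have "(\<lambda>k. hs_inner s (uk k) v') \<longlonglongrightarrow> hs_inner s u v'"
    using conv v' unfolding weak_conv_Hs0_def by blast
  moreover have "uk k \<in> Hs0 s \<Omega>" "u \<in> Hs0 s \<Omega>" for k
    using conv unfolding weak_conv_Hs0_def by auto
  ultimately show ?thesis
    using represents by simp
qed

lemma bounded_linear_Hs0_kernel_form:
  assumes W: "admissible_kernel s W" and v: "v \<in> Hs0 s \<Omega>"
  shows "bounded_linear_Hs0 s \<Omega> (kernel_form W v)"
proof -
  obtain C where C: "C \<ge> 0" "\<And>x y. x \<noteq> y \<Longrightarrow> W x y \<le> C * frac_kernel s x y"
    using admissible_kernel_bound[OF W] by blast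
  show ?thesis
  proof (rule bounded_linear_Hs0I[where L = "sqrt (kernel_form W v v) * sqrt C"])
    fix f assume f: "f \<in> Hs0 s \<Omega>"
    have "\<bar>kernel_form W v f\<bar> \<le> sqrt (kernel_form W v v) * sqrt (kernel_form W f f)"
      by (rule kernel_form_Cauchy_Schwarz[OF W v f])
    also have "\<dots> \<le> sqrt (kernel_form W v v) * sqrt (C * frac_form s f f)"
      using kernel_form_le_frac_form[OF W C(2) f] kernel_form_nonneg[OF W, of v]
      by (intro mult_left_mono real_sqrt_le_mono) auto
    finally show "\<bar>kernel_form W v f\<bar> \<le> sqrt (kernel_form W v v) * sqrt C * sqrt (frac_form s f f)"
      by (simp add: real_sqrt_mult mult.assoc)
  qed (use kernel_form_add_right[OF W] in \<open>auto simp: kernel_form_cmult_right v\<close>)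
qed

lemma integrable_mult_of_square_integrable:
  fixes f g :: "'a \<Rightarrow> real"
  assumes [measurable]: "f \<in> borel_measurable M" "g \<in> borel_measurable M"
    and "integrable M (\<lambda>x. (f x)\<^sup>2)" "integrable M (\<lambda>x. (g x)\<^sup>2)"
  shows "integrable M (\<lambda>x. g x * f x)"
  by (rule Bochner_Integration.integrable_bound[where f = "\<lambda>x. (g x)\<^sup>2 + (f x)\<^sup>2"])
    (use assms(3,4) abs_mult_le_sum_squares in auto)

lemma L2_Cauchy_Schwarz:
  fixes f g :: "'a \<Rightarrow> real"
  assumes [measurable]: "f \<in> borel_measurable M" "g \<in> borel_measurable M"
    and f2: "integrable M (\<lambda>x. (f x)\<^sup>2)" and g2: "integrable M (\<lambda>x. (g x)\<^sup>2)"
  shows "\<bar>\<integral>x. g x * f x \<partial>M\<bar> \<le> sqrt (\<integral>x. (g x)\<^sup>2 \<partial>M) * sqrt (\<integral>x. (f x)\<^sup>2 \<partial>M)"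
proof -
  have fg: "integrable M (\<lambda>x. g x * f x)"
    by (rule integrable_mult_of_square_integrable) (use f2 g2 in auto)
  have "(\<integral>x. g x * f x \<partial>M)\<^sup>2 \<le> (\<integral>x. (g x)\<^sup>2 \<partial>M) * (\<integral>x. (f x)\<^sup>2 \<partial>M)"
  proof (rule nonneg_quadratic_discriminant)
    fix t
    have "0 \<le> (\<integral>x. (g x + t * f x)\<^sup>2 \<partial>M)" by simp
    also have "\<dots> = (\<integral>x. (g x)\<^sup>2 + 2 * t * (g x * f x) + t\<^sup>2 * (f x)\<^sup>2 \<partial>M)"
      by (intro Bochner_Integration.integral_cong) (auto simp: power2_eq_square algebra_simps)
    also have "\<dots> = (\<integral>x. (g x)\<^sup>2 \<partial>M) + 2 * t * (\<integral>x. g x * f x \<partial>M) + t\<^sup>2 * (\<integral>x. (f x)\<^sup>2 \<partial>M)"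
      using f2 g2 fg by simp
    finally show "0 \<le> (\<integral>x. (g x)\<^sup>2 \<partial>M) + 2 * t * (\<integral>x. g x * f x \<partial>M) + t\<^sup>2 * (\<integral>x. (f x)\<^sup>2 \<partial>M)" .
  qed simp
  then show ?thesis
    by (metis real_sqrt_abs real_sqrt_le_mono real_sqrt_mult)
qed

lemma bounded_linear_Hs0_L2_pairing:
  fixes \<Omega> :: "(real^'n) set" and g :: "real^'n \<Rightarrow> real"
  assumes \<Omega>: "bounded \<Omega>" and s: "0 < s"
    and g: "g \<in> borel_measurable lebesgue" "integrable lebesgue (\<lambda>x. (g x)\<^sup>2)"
  shows "bounded_linear_Hs0 s \<Omega> (\<lambda>f. \<integral>x. g x * f x \<partial>lebesgue)"
proof -
  have int: "integrable lebesgue (\<lambda>x. g x * f x)" if "f \<in> Hs0 s \<Omega>" for f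
    using Hs0_lebesgue[OF that] g by (intro integrable_mult_of_square_integrable) auto
  obtain P where P: "P > 0" "\<And>f. f \<in> Hs0 s \<Omega> \<Longrightarrow> (\<integral>x. (f x)\<^sup>2 \<partial>lborel) \<le> P * frac_form s f f"
    using frac_form_Poincare[OF \<Omega> s] by blast
  show ?thesis
  proof (rule bounded_linear_Hs0I[where L = "sqrt (\<integral>x. (g x)\<^sup>2 \<partial>lebesgue) * sqrt P"])
    fix f assume f: "f \<in> Hs0 s \<Omega>"
    note f_lebesgue = Hs0_lebesgue[OF f]
    have "\<bar>\<integral>x. g x * f x \<partial>lebesgue\<bar> \<le> sqrt (\<integral>x. (g x)\<^sup>2 \<partial>lebesgue) * sqrt (\<integral>x. (f x)\<^sup>2 \<partial>lebesgue)"
      using f_lebesgue(1,2) g by (intro L2_Cauchy_Schwarz) auto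
    also have "\<dots> \<le> sqrt (\<integral>x. (g x)\<^sup>2 \<partial>lebesgue) * sqrt (P * frac_form s f f)"
      using P(2)[OF f] f_lebesgue(3) by (intro mult_left_mono real_sqrt_le_mono) auto
    finally show "\<bar>\<integral>x. g x * f x \<partial>lebesgue\<bar> \<le> sqrt (\<integral>x. (g x)\<^sup>2 \<partial>lebesgue) * sqrt P * sqrt (frac_form s f f)"
      by (simp add: real_sqrt_mult mult.assoc)
  next
    fix f h assume "f \<in> Hs0 s \<Omega>" "h \<in> Hs0 s \<Omega>"
    then show "(\<integral>x. g x * (f x + h x) \<partial>lebesgue) = (\<integral>x. g x * f x \<partial>lebesgue) + (\<integral>x. g x * h x \<partial>lebesgue)"
      using int by (simp add: distrib_left)
  qed (simp add: mult.left_commute)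
qed

lemma weak_conv_Hs0_kernel_form:
  fixes \<Omega> :: "(real^'n) set"
  assumes "bounded \<Omega>" "0 < s" "s < 1" "admissible_kernel s W" "v \<in> Hs0 s \<Omega>"
    and "weak_conv_Hs0 s \<Omega> uk u"
  shows "(\<lambda>k. kernel_form W v (uk k)) \<longlonglongrightarrow> kernel_form W v u"
  using assms by (intro weak_conv_Hs0_bounded_linear bounded_linear_Hs0_kernel_form)

lemma weak_conv_Hs0_L2_pairing:
  fixes \<Omega> :: "(real^'n) set"
  assumes "bounded \<Omega>" "0 < s" "s < 1"
    and "g \<in> borel_measurable lebesgue" "integrable lebesgue (\<lambda>x. (g x)\<^sup>2)"
    and "weak_conv_Hs0 s \<Omega> uk u"
  shows "(\<lambda>k. \<integral>x. g x * uk k x \<partial>lebesgue) \<longlonglongrightarrow> (\<integral>x. g x * u x \<partial>lebesgue)"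
  using assms
  by (intro weak_conv_Hs0_bounded_linear[where l = "\<lambda>f. \<integral>x. g x * f x \<partial>lebesgue"]
      bounded_linear_Hs0_L2_pairing)

section \<open>The primitive of \<open>h\<close>\<close>

lemma primH_has_real_derivative:
  assumes "continuous_on UNIV h"
  shows "(primH h has_real_derivative h x) (at x)"
proof -
  define a where "a = min x 0 - 1"
  define b where "b = max x 0 + 1"
  have "((\<lambda>t. interval_lebesgue_integral lborel (ereal 0) (ereal t) h) has_vector_derivative h x)
      (at x within {a..b})"
    by (rule interval_integral_FTC2) (use continuous_on_subset[OF assms] in \<open>auto simp: a_def b_def\<close>)
  moreover have "at x within {a..b} = at x"
    by (rule at_within_Icc_at) (auto simp: a_def b_def)
  ultimately show ?thesis
    unfolding primH_def has_real_derivative_iff_has_vector_derivative zero_ereal_def by simp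
qed

lemma primH_0: "primH h 0 = 0"
  by (simp add: primH_def interval_lebesgue_integral_def einterval_def set_lebesgue_integral_def)

lemma primH_continuous:
  assumes "continuous_on UNIV h"
  shows "continuous_on UNIV (primH h)"
  using DERIV_isCont[OF primH_has_real_derivative[OF assms]] by (blast intro: continuous_at_imp_continuous_on)

lemma primH_tangent_le:
  assumes h: "continuous_on UNIV h" "mono h"
  shows "primH h a + h a * (b - a) \<le> primH h b"
proof (cases a b rule: linorder_cases)
  case less
  obtain z where z: "a < z" "z < b" "primH h b - primH h a = (b - a) * h z"
    using MVT2[OF less primH_has_real_derivative[OF h(1)]] by blast
  have "(b - a) * h a \<le> (b - a) * h z"
    using monoD[OF h(2), of a z] z less by (intro mult_left_mono) auto
  then show ?thesis using z by argo
next
  case greater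
  obtain z where z: "b < z" "z < a" "primH h a - primH h b = (a - b) * h z"
    using MVT2[OF greater primH_has_real_derivative[OF h(1)]] by blast
  have "(a - b) * h z \<le> (a - b) * h a"
    using monoD[OF h(2), of z a] z greater by (intro mult_left_mono) auto
  then show ?thesis using z by argo
qed simp

lemma primH_nonneg:
  assumes "continuous_on UNIV h" "mono h" "h 0 = 0"
  shows "0 \<le> primH h t"
  using primH_tangent_le[OF assms(1,2), of 0 t] assms(3) by (simp add: primH_0)

section \<open>Weak lower semicontinuity of the energy\<close>

lemma integrable_bounded_finite_support:
  fixes f :: "'a \<Rightarrow> real"
  assumes [measurable]: "f \<in> borel_measurable M" "S \<in> sets M" and "emeasure M S < \<infinity>"
    and "\<And>x. x \<notin> S \<Longrightarrow> f x = 0" and "AE x in M. \<bar>f x\<bar> \<le> B"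
  shows "integrable M f"
proof (rule Bochner_Integration.integrable_bound[where f = "\<lambda>x. B * indicator S x"])
  show "integrable M (\<lambda>x. B * indicator S x)"
    using assms(2,3) by (intro Bochner_Integration.integrable_mult_right) (simp add: less_top)
  show "AE x in M. norm (f x) \<le> norm (B * indicator S x)"
    using assms(5) by eventually_elim (use assms(4) in \<open>auto simp: indicator_def\<close>)
qed simp

lemma nn_integral_truncation_tendsto:
  fixes F g :: "'a \<Rightarrow> real"
  assumes [measurable]: "F \<in> borel_measurable M" "g \<in> borel_measurable M"
  shows "(\<lambda>n. \<integral>\<^sup>+x. ennreal (indicator {x. \<bar>g x\<bar> \<le> real n} x * F x) \<partial>M) \<longlonglongrightarrow> (\<integral>\<^sup>+x. ennreal (F x) \<partial>M)"
proof (rule nn_integral_LIMSEQ)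
  show "incseq (\<lambda>n x. ennreal (indicator {x. \<bar>g x\<bar> \<le> real n} x * F x))"
    by (intro incseq_SucI le_funI) (auto simp: indicator_def intro!: ennreal_leI)
  show "(\<lambda>n. ennreal (indicator {x. \<bar>g x\<bar> \<le> real n} x * F x)) \<longlonglongrightarrow> ennreal (F x)" for x
  proof (rule tendsto_eventually)
    obtain N :: nat where "\<bar>g x\<bar> \<le> real N"
      using real_arch_simple by blast
    then show "\<forall>\<^sub>F n in sequentially. ennreal (indicator {x. \<bar>g x\<bar> \<le> real n} x * F x) = ennreal (F x)"
      unfolding eventually_sequentially by (intro exI[of _ N]) auto
  qed
qed measurable

locale fractional_energy =
  fixes s :: real and \<Omega> :: "(real^'n) set" and K :: "real^'n \<Rightarrow> real^'n \<Rightarrow> real"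
    and h :: "real \<Rightarrow> real" and \<eta> \<zeta> :: "real^'n \<Rightarrow> real"
  assumes s: "0 < s" "s < 1"
    and \<Omega>: "open \<Omega>" "bounded \<Omega>"
    and K: "admissible_kernel s K"
    and h: "continuous_on UNIV h" "mono h" "h 0 = 0"
    and \<eta>: "set_borel_measurable lebesgue \<Omega> \<eta>" "\<exists>M. AE x in lebesgue. x \<in> \<Omega> \<longrightarrow> 0 \<le> \<eta> x \<and> \<eta> x \<le> M"
    and \<zeta>: "set_borel_measurable lebesgue \<Omega> \<zeta>" "set_integrable lebesgue \<Omega> (\<lambda>x. (\<zeta> x)\<^sup>2)"
begin

abbreviation J :: "(real^'n \<Rightarrow> real) \<Rightarrow> ereal" where
  "J \<equiv> Jfun \<Omega> K h \<eta> \<zeta>"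

definition potential :: "(real^'n \<Rightarrow> real) \<Rightarrow> real^'n \<Rightarrow> real" where
  "potential f x = indicator \<Omega> x * \<eta> x * primH h (f x)"

definition source :: "real^'n \<Rightarrow> real" where
  "source x = indicator \<Omega> x * \<zeta> x"

definition quadratic_part :: "(real^'n \<Rightarrow> real) \<Rightarrow> real" where
  "quadratic_part f = kernel_form K f f / 4 - (\<integral>x. source x * f x \<partial>lebesgue)"

text \<open>The truncation level \<open>M\<close> makes the slope \<open>\<eta> h(u)\<close> bounded, hence square integrable, so that
  the derivative of the truncated functional at \<open>u\<close> is a bounded linear functional on \<open>H\<^sup>s\<^sub>0\<close>.\<close>
definition truncated_potential :: "(real^'n \<Rightarrow> real) \<Rightarrow> nat \<Rightarrow> real^'n \<Rightarrow> real" where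
  "truncated_potential u M x = indicator {x. \<bar>u x\<bar> \<le> real M} x * potential u x"

definition truncated_slope :: "(real^'n \<Rightarrow> real) \<Rightarrow> nat \<Rightarrow> real^'n \<Rightarrow> real" where
  "truncated_slope u M x = indicator {x. \<bar>u x\<bar> \<le> real M} x * (indicator \<Omega> x * \<eta> x * h (u x))"

definition tangent :: "(real^'n \<Rightarrow> real) \<Rightarrow> nat \<Rightarrow> (real^'n \<Rightarrow> real) \<Rightarrow> real" where
  "tangent u M f = kernel_form K u f / 2 + (\<integral>x. truncated_slope u M x * f x \<partial>lebesgue)
     - (\<integral>x. source x * f x \<partial>lebesgue)"

lemma \<Omega>_lebesgue: "\<Omega> \<in> sets lebesgue" "emeasure lebesgue \<Omega> < \<infinity>"
  using \<Omega> emeasure_bounded_finite[of \<Omega>] by auto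

lemma h_measurable [measurable]: "h \<in> borel_measurable borel"
  using h(1) by (rule borel_measurable_continuous_onI)

lemma primH_measurable [measurable]: "primH h \<in> borel_measurable borel"
  using primH_continuous[OF h(1)] by (rule borel_measurable_continuous_onI)

lemma \<eta>_measurable [measurable]: "(\<lambda>x. indicator \<Omega> x * \<eta> x) \<in> borel_measurable lebesgue"
  using \<eta>(1) unfolding set_borel_measurable_def by simp

lemma potential_measurable [measurable]:
  "f \<in> borel_measurable lebesgue \<Longrightarrow> potential f \<in> borel_measurable lebesgue"
  unfolding potential_def by measurable

lemma potential_nonneg: "AE x in lebesgue. 0 \<le> potential f x"
proof -
  obtain M where "AE x in lebesgue. x \<in> \<Omega> \<longrightarrow> 0 \<le> \<eta> x \<and> \<eta> x \<le> M"
    using \<eta>(2) by blast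
  then show ?thesis
    by eventually_elim (auto simp: potential_def indicator_def primH_nonneg[OF h])
qed

lemma source_L2: "source \<in> borel_measurable lebesgue" "integrable lebesgue (\<lambda>x. (source x)\<^sup>2)"
proof -
  show "source \<in> borel_measurable lebesgue"
    using \<zeta>(1) unfolding set_borel_measurable_def source_def by simp
  have "(\<lambda>x. (source x)\<^sup>2) = (\<lambda>x. indicator \<Omega> x * (\<zeta> x)\<^sup>2)"
    by (auto simp: source_def indicator_def)
  then show "integrable lebesgue (\<lambda>x. (source x)\<^sup>2)"
    using \<zeta>(2) unfolding set_integrable_def by simp
qed

lemma Jfun_eq:
  "J f = (if integrable lebesgue (potential f)
          then ereal (quadratic_part f + integral\<^sup>L lebesgue (potential f)) else \<infinity>)"
proof -
  have "(\<lambda>x. indicator \<Omega> x *\<^sub>R (\<eta> x * primH h (f x))) = potential f"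
    by (auto simp: fun_eq_iff potential_def)
  moreover have "(\<lambda>x. indicator \<Omega> x *\<^sub>R (\<zeta> x * f x)) = (\<lambda>x. source x * f x)"
    by (auto simp: fun_eq_iff source_def)
  moreover have "integral\<^sup>L (lborel \<Otimes>\<^sub>M lborel) (\<lambda>(x, z). \<bar>f x - f z\<bar>\<^sup>2 * K x z) = kernel_form K f f"
    unfolding kernel_form_def by (rule Bochner_Integration.integral_cong) (auto simp: power2_eq_square)
  ultimately show ?thesis
    unfolding Jfun_def set_integrable_def set_lebesgue_integral_def quadratic_part_def by simp
qed

lemma Jfun_eq_nn_integral:
  assumes "f \<in> borel_measurable lebesgue"
  shows "J f = ereal (quadratic_part f) + enn2ereal (\<integral>\<^sup>+x. ennreal (potential f x) \<partial>lebesgue)"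
proof (cases "integrable lebesgue (potential f)")
  case True
  have "(\<integral>\<^sup>+x. ennreal (potential f x) \<partial>lebesgue) = ennreal (integral\<^sup>L lebesgue (potential f))"
    by (rule nn_integral_eq_integral[OF True potential_nonneg])
  moreover have "0 \<le> integral\<^sup>L lebesgue (potential f)"
    by (rule integral_nonneg_AE[OF potential_nonneg])
  ultimately show ?thesis
    using True by (simp add: Jfun_eq)
next
  case False
  have "(\<integral>\<^sup>+x. ennreal (potential f x) \<partial>lebesgue) = \<infinity>"
  proof (rule ccontr)
    assume "(\<integral>\<^sup>+x. ennreal (potential f x) \<partial>lebesgue) \<noteq> \<infinity>"
    then have "integrable lebesgue (potential f)"
      by (intro integrableI_nonneg[OF potential_measurable[OF assms] potential_nonneg]) (simp add: less_top)
    with False show False ..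
  qed
  then show ?thesis
    using False by (simp add: Jfun_eq)
qed

lemma truncation_bound: "\<exists>C. AE x in lebesgue. \<bar>truncated_slope u M x\<bar> \<le> C \<and> \<bar>truncated_potential u M x\<bar> \<le> C"
proof -
  obtain E where E: "AE x in lebesgue. x \<in> \<Omega> \<longrightarrow> 0 \<le> \<eta> x \<and> \<eta> x \<le> E"
    using \<eta>(2) by blast
  obtain B where B: "B \<ge> 0" "\<And>t. t \<in> {- real M..real M} \<Longrightarrow> norm (h t) \<le> B"
    using continuous_on_compact_bound[OF compact_Icc continuous_on_subset[OF h(1)]] by blast
  obtain B' where B': "B' \<ge> 0" "\<And>t. t \<in> {- real M..real M} \<Longrightarrow> norm (primH h t) \<le> B'"
    using continuous_on_compact_bound[OF compact_Icc continuous_on_subset[OF primH_continuous[OF h(1)]]] by blast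
  define C where "C = max E 0 * (B + B')"
  have "AE x in lebesgue. \<bar>truncated_slope u M x\<bar> \<le> C \<and> \<bar>truncated_potential u M x\<bar> \<le> C"
    using E
  proof eventually_elim
    case (elim x)
    show ?case
    proof (cases "x \<in> \<Omega> \<and> \<bar>u x\<bar> \<le> real M")
      case True
      then have "\<bar>h (u x)\<bar> \<le> B" "\<bar>primH h (u x)\<bar> \<le> B'"
        using B(2)[of "u x"] B'(2)[of "u x"] by (auto simp: abs_le_iff)
      then have "\<bar>h (u x)\<bar> \<le> B + B'" "\<bar>primH h (u x)\<bar> \<le> B + B'" "\<bar>\<eta> x\<bar> \<le> max E 0"
        using B(1) B'(1) True elim by auto
      then show ?thesis
        using True unfolding C_def
        by (auto simp: truncated_slope_def truncated_potential_def potential_def abs_mult intro!: mult_mono)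
    next
      case False
      then have "truncated_slope u M x = 0" "truncated_potential u M x = 0"
        by (auto simp: truncated_slope_def truncated_potential_def potential_def)
      moreover have "0 \<le> C"
        unfolding C_def using B(1) B'(1) by simp
      ultimately show ?thesis by simp
    qed
  qed
  then show ?thesis ..
qed

lemma truncated_slope_L2:
  assumes [measurable]: "u \<in> borel_measurable lebesgue"
  shows "truncated_slope u M \<in> borel_measurable lebesgue"
    "integrable lebesgue (\<lambda>x. (truncated_slope u M x)\<^sup>2)"
proof -
  show [measurable]: "truncated_slope u M \<in> borel_measurable lebesgue"
    unfolding truncated_slope_def by measurable
  obtain C where "AE x in lebesgue. \<bar>truncated_slope u M x\<bar> \<le> C"
    using truncation_bound[of u M] by (auto elim: eventually_mono)
  then have "AE x in lebesgue. \<bar>(truncated_slope u M x)\<^sup>2\<bar> \<le> C\<^sup>2"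
    by eventually_elim (metis abs_ge_zero abs_power2 order_trans power2_abs power_mono)
  then show "integrable lebesgue (\<lambda>x. (truncated_slope u M x)\<^sup>2)"
    by (intro integrable_bounded_finite_support[OF _ \<Omega>_lebesgue]) (auto simp: truncated_slope_def)
qed

lemma truncated_potential_integrable:
  assumes [measurable]: "u \<in> borel_measurable lebesgue"
  shows "integrable lebesgue (truncated_potential u M)"
proof -
  have [measurable]: "truncated_potential u M \<in> borel_measurable lebesgue"
    unfolding truncated_potential_def by measurable
  obtain C where "AE x in lebesgue. \<bar>truncated_potential u M x\<bar> \<le> C"
    using truncation_bound[of u M] by (auto elim: eventually_mono)
  then show ?thesis
    by (intro integrable_bounded_finite_support[OF _ \<Omega>_lebesgue])
      (auto simp: truncated_potential_def potential_def)
qed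


lemma potential_ge_tangent:
  "AE x in lebesgue. truncated_potential u M x + truncated_slope u M x * (f x - u x) \<le> potential f x"
proof -
  obtain E where "AE x in lebesgue. x \<in> \<Omega> \<longrightarrow> 0 \<le> \<eta> x \<and> \<eta> x \<le> E"
    using \<eta>(2) by blast
  then show ?thesis
  proof eventually_elim
    case (elim x)
    have "indicator {x. \<bar>u x\<bar> \<le> real M} x * (primH h (u x) + h (u x) * (f x - u x)) \<le> primH h (f x)"
      using primH_tangent_le[OF h(1,2), of "u x" "f x"] primH_nonneg[OF h, of "f x"]
      by (auto simp: indicator_def)
    then have "indicator \<Omega> x * \<eta> x * (indicator {x. \<bar>u x\<bar> \<le> real M} x * (primH h (u x) + h (u x) * (f x - u x)))
        \<le> indicator \<Omega> x * \<eta> x * primH h (f x)"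
      using elim by (intro mult_left_mono) (auto simp: indicator_def)
    then show ?case
      by (simp add: truncated_potential_def truncated_slope_def potential_def algebra_simps)
  qed
qed

lemma Jfun_ge_tangent:
  assumes u: "u \<in> Hs0 s \<Omega>" and f: "f \<in> Hs0 s \<Omega>"
  shows "ereal (quadratic_part u + integral\<^sup>L lebesgue (truncated_potential u M) + tangent u M f - tangent u M u)
    \<le> J f"
proof (cases "integrable lebesgue (potential f)")
  case False
  then show ?thesis by (simp add: Jfun_eq)
next
  case True
  have [measurable]: "u \<in> borel_measurable lebesgue" "f \<in> borel_measurable lebesgue"
    using Hs0_lebesgue(1)[OF u] Hs0_lebesgue(1)[OF f] .
  have slope: "integrable lebesgue (\<lambda>x. truncated_slope u M x * g x)" if "g \<in> Hs0 s \<Omega>" for g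
    using truncated_slope_L2[of u M] Hs0_lebesgue[OF that]
    by (intro integrable_mult_of_square_integrable) auto
  have T: "integrable lebesgue (truncated_potential u M)"
    by (rule truncated_potential_integrable) measurable
  have "integral\<^sup>L lebesgue (truncated_potential u M) + (\<integral>x. truncated_slope u M x * f x \<partial>lebesgue)
      - (\<integral>x. truncated_slope u M x * u x \<partial>lebesgue)
      = (\<integral>x. truncated_potential u M x + truncated_slope u M x * (f x - u x) \<partial>lebesgue)"
    using T slope[OF f] slope[OF u] by (simp add: right_diff_distrib)
  also have "\<dots> \<le> integral\<^sup>L lebesgue (potential f)"
    using T slope[OF f] slope[OF u] True potential_ge_tangent
    by (intro integral_mono_AE) (auto simp: right_diff_distrib)
  finally have "integral\<^sup>L lebesgue (truncated_potential u M) + (\<integral>x. truncated_slope u M x * f x \<partial>lebesgue)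
      - (\<integral>x. truncated_slope u M x * u x \<partial>lebesgue) \<le> integral\<^sup>L lebesgue (potential f)" .
  moreover have "2 * kernel_form K u f - kernel_form K u u \<le> kernel_form K f f"
    by (rule kernel_form_convex[OF K f u])
  ultimately have "quadratic_part u + integral\<^sup>L lebesgue (truncated_potential u M) + tangent u M f - tangent u M u
      \<le> quadratic_part f + integral\<^sup>L lebesgue (potential f)"
    unfolding quadratic_part_def tangent_def by linarith
  then show ?thesis
    using True by (simp add: Jfun_eq)
qed

lemma tangent_tendsto:
  assumes conv: "weak_conv_Hs0 s \<Omega> uk u"
  shows "(\<lambda>k. tangent u M (uk k)) \<longlonglongrightarrow> tangent u M u"
proof -
  have u: "u \<in> Hs0 s \<Omega>"
    using conv unfolding weak_conv_Hs0_def by blast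
  note slope = truncated_slope_L2[OF Hs0_lebesgue(1)[OF u], of M]
  have "(\<lambda>k. kernel_form K u (uk k)) \<longlonglongrightarrow> kernel_form K u u"
    by (rule weak_conv_Hs0_kernel_form[OF \<Omega>(2) s K u conv])
  moreover have "(\<lambda>k. \<integral>x. truncated_slope u M x * uk k x \<partial>lebesgue) \<longlonglongrightarrow> (\<integral>x. truncated_slope u M x * u x \<partial>lebesgue)"
    by (rule weak_conv_Hs0_L2_pairing[OF \<Omega>(2) s slope conv])
  moreover have "(\<lambda>k. \<integral>x. source x * uk k x \<partial>lebesgue) \<longlonglongrightarrow> (\<integral>x. source x * u x \<partial>lebesgue)"
    by (rule weak_conv_Hs0_L2_pairing[OF \<Omega>(2) s source_L2 conv])
  ultimately show ?thesis
    unfolding tangent_def by (intro tendsto_diff tendsto_add tendsto_divide tendsto_const) simp_all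
qed

lemma liminf_Jfun_ge_truncation:
  assumes conv: "weak_conv_Hs0 s \<Omega> uk u"
  shows "ereal (quadratic_part u + integral\<^sup>L lebesgue (truncated_potential u M)) \<le> liminf (\<lambda>k. J (uk k))"
proof -
  have u: "u \<in> Hs0 s \<Omega>" and uk: "\<And>k. uk k \<in> Hs0 s \<Omega>"
    using conv unfolding weak_conv_Hs0_def by auto
  define c where "c = quadratic_part u + integral\<^sup>L lebesgue (truncated_potential u M)"
  have "(\<lambda>k. ereal (c + tangent u M (uk k) - tangent u M u)) \<longlonglongrightarrow> ereal (c + tangent u M u - tangent u M u)"
    unfolding lim_ereal by (intro tendsto_diff tendsto_add tendsto_const tangent_tendsto[OF conv])
  then have "liminf (\<lambda>k. ereal (c + tangent u M (uk k) - tangent u M u)) = ereal c"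
    by (simp add: lim_imp_Liminf)
  moreover have "liminf (\<lambda>k. ereal (c + tangent u M (uk k) - tangent u M u)) \<le> liminf (\<lambda>k. J (uk k))"
    unfolding c_def by (intro Liminf_mono always_eventually allI Jfun_ge_tangent u uk)
  ultimately show ?thesis
    unfolding c_def by simp
qed

lemma truncation_tendsto_Jfun:
  assumes u: "u \<in> Hs0 s \<Omega>"
  shows "(\<lambda>M. ereal (quadratic_part u + integral\<^sup>L lebesgue (truncated_potential u M))) \<longlonglongrightarrow> J u"
proof -
  have [measurable]: "u \<in> borel_measurable lebesgue"
    by (rule Hs0_lebesgue(1)[OF u])
  have T_nonneg: "AE x in lebesgue. 0 \<le> truncated_potential u M x" for M
    using potential_nonneg[of u] by eventually_elim (simp add: truncated_potential_def)
  have "(\<lambda>M. \<integral>\<^sup>+x. ennreal (truncated_potential u M x) \<partial>lebesgue) \<longlonglongrightarrow> (\<integral>\<^sup>+x. ennreal (potential u x) \<partial>lebesgue)"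
    unfolding truncated_potential_def by (rule nn_integral_truncation_tendsto) measurable
  moreover have "(\<integral>\<^sup>+x. ennreal (truncated_potential u M x) \<partial>lebesgue)
      = ennreal (integral\<^sup>L lebesgue (truncated_potential u M))" for M
    by (rule nn_integral_eq_integral[OF truncated_potential_integrable T_nonneg]) measurable
  moreover have "enn2ereal (ennreal (integral\<^sup>L lebesgue (truncated_potential u M)))
      = ereal (integral\<^sup>L lebesgue (truncated_potential u M))" for M
    using integral_nonneg_AE[OF T_nonneg] by simp
  ultimately have "(\<lambda>M. ereal (integral\<^sup>L lebesgue (truncated_potential u M)))
      \<longlonglongrightarrow> enn2ereal (\<integral>\<^sup>+x. ennreal (potential u x) \<partial>lebesgue)"
    using tendsto_enn2erealI by fastforce
  then have "(\<lambda>M. ereal (quadratic_part u) + ereal (integral\<^sup>L lebesgue (truncated_potential u M)))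
      \<longlonglongrightarrow> ereal (quadratic_part u) + enn2ereal (\<integral>\<^sup>+x. ennreal (potential u x) \<partial>lebesgue)"
    by (intro tendsto_add_ereal_general tendsto_const) auto
  then show ?thesis
    using Jfun_eq_nn_integral by simp
qed

theorem Jfun_weakly_lsc:
  assumes conv: "weak_conv_Hs0 s \<Omega> uk u"
  shows "J u \<le> liminf (\<lambda>k. J (uk k))"
proof (rule LIMSEQ_le_const2)
  show "(\<lambda>M. ereal (quadratic_part u + integral\<^sup>L lebesgue (truncated_potential u M))) \<longlonglongrightarrow> J u"
    using conv unfolding weak_conv_Hs0_def by (blast intro: truncation_tendsto_Jfun)
qed (use liminf_Jfun_ge_truncation[OF conv] in blast)

end

theorem lemma2p6:
  fixes \<Omega> :: "(real ^ 'n) set"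
    and K :: "real ^ 'n \<Rightarrow> real ^ 'n \<Rightarrow> real"
    and h :: "real \<Rightarrow> real"
    and \<eta> \<zeta> u :: "real ^ 'n \<Rightarrow> real"
    and uk :: "nat \<Rightarrow> real ^ 'n \<Rightarrow> real"
    and s c C :: real and \<rho> :: ereal
  assumes s: "0 < s" "s < 1"
    and \<Omega>: "open \<Omega>" "bounded \<Omega>" "lipschitz_boundary \<Omega>"
    and Kmeas: "(\<lambda>(x, z). K x z) \<in> borel_measurable (lborel \<Otimes>\<^sub>M lborel)"
    and Ksym: "\<And>x z. K x z = K z x"
    and cC: "c > 0" "C > 0" "\<rho> > 0"
    and Klow: "\<And>x z. x \<noteq> z \<Longrightarrow>
        c * indicator {t. ereal t < \<rho>} (dist x z) / dist x z powr (real CARD('n) + 2 * s) \<le> K x z"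
    and Kup: "\<And>x z. x \<noteq> z \<Longrightarrow> K x z \<le> C / dist x z powr (real CARD('n) + 2 * s)"
    and h: "continuous_on UNIV h" "\<And>t. h (- t) = - h t" "strict_mono h"
    and \<eta>: "set_borel_measurable lebesgue \<Omega> \<eta>"
       "\<exists>M. AE x in lebesgue. x \<in> \<Omega> \<longrightarrow> 0 \<le> \<eta> x \<and> \<eta> x \<le> M"
    and \<zeta>: "set_borel_measurable lebesgue \<Omega> \<zeta>" "set_integrable lebesgue \<Omega> (\<lambda>x. (\<zeta> x)\<^sup>2)"
    and conv: "weak_conv_Hs0 s \<Omega> uk u"
  shows "liminf (\<lambda>k. Jfun \<Omega> K h \<eta> \<zeta> (uk k)) \<ge> Jfun \<Omega> K h \<eta> \<zeta> u"
proof -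
  have "0 \<le> K x z" if "x \<noteq> z" for x z
    using cC(1) by (intro order_trans[OF _ Klow[OF that]] divide_nonneg_nonneg mult_nonneg_nonneg) auto
  then have "admissible_kernel s K"
    unfolding admissible_kernel_def frac_kernel_def using Kmeas Kup cC(2)
    by (intro conjI exI[of _ C]) auto
  moreover have "h 0 = 0"
    using h(2)[of 0] by simp
  ultimately interpret fractional_energy s \<Omega> K h \<eta> \<zeta>
    using s \<Omega>(1,2) h(1) strict_mono_mono[OF h(3)] \<eta> \<zeta> by unfold_locales auto
  show ?thesis
    using Jfun_weakly_lsc[OF conv] .
qed

end
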